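(* Consider the control system $\dot{\mathbf{x}}(s)=f(\mathbf{x}(s),\mathbf{u}(s))$ for $s\in[-t,0]$, $\mathbf{x}(-t)=x$, with $\mathbf{x}(s)\in\mathbb{R}^{n_x}$, measurable controls $\mathbf{u}(s)\in U\subset\mathbb{R}^{n_u}$, and $f$ Lipschitz continuous in the state. Let $g,l:\mathbb{R}^{n_x}\to\mathbb{R}$ be Lipschitz continuous, with unsafe set $\mathcal{X}_{\mathcal{U}}=\{x: g(x)\le 0\}$ and target set $\mathcal{X}_{\mathcal{T}}=\{x:l(x)\ge0\}$. Define the true value functions (Avoid) $V(x,t)=\sup_{\mathbf{u}(\cdot)}\min_{s\in[-t,0]}g(\mathbf{x}(s))$, and (ReachAvoid) $V(x,t)=\sup_{\mathbf{u}(\cdot)}\max_{s\in[-t,0]}\min\{l(\mathbf{x}(s)),\min_{\tau\in[-t,s]}g(\mathbf{x}(\tau))\}$. Let $\mathcal{D}=\{(x^i,u^i,v^i)\}_{i=1}^N$ with $u^i\in U$, $v^i=f(x^i,u^i)$, let $\mathcal{E}$ be a closed-valued set-valued map with $f(x,u^i)-v^i\in\mathcal{E}(x;x^i)$ for all $i$ and all $x$, and let $\widehat{H}(x,p)=\max_{i\in\{1,\dots,N\}}\min_{\widehat{v}^i\in v^i\oplus\mathcal{E}(x;x^i)}p^\top\widehat{v}^i$. Let the data-driven value function $\widehat{V}$ be the viscosity solution of the corresponding HJ variational inequality with $\widehat{H}$ in place of the Hamiltonian, namely (Avoid) $0=\min\{g(x)-\widehat{V}(x,t),\,-D_t\widehat{V}(x,t)+\widehat{H}(x,D_x\widehat{V}(x,t))\}$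 with $\widehat{V}(x,0)=g(x)$; (ReachAvoid) $0=\min\{g(x)-\widehat{V}(x,t),\ \max\{l(x)-\widehat{V}(x,t),\,-D_t\widehat{V}(x,t)+\widehat{H}(x,D_x\widehat{V}(x,t))\}\}$ with $\widehat{V}(x,0)=\min\{l(x),g(x)\}$. Then, for each of the two problems, $\widehat{V}(x,t)\le V(x,t)$ for all $x\in\mathbb{R}^{n_x}$ and $t\ge0$.
   Context: $\oplus$ is the Minkowski sum. The true value functions $V$ are (by dynamic programming) the viscosity solutions of the same variational inequalities with the true Hamiltonian $H(x,p)=\max_{u\in U}p^\top f(x,u)$. The condition $f(x,u^i)-v^i\in\mathcal{E}(x;x^i)$ (valid uncertainty sets) is a standing assumption under which the data-driven Hamiltonian is defined. *)

theory Defs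
  imports "HOL-Analysis.Analysis"
begin

definition admissible_control :: "'u::euclidean_space set \<Rightarrow> real \<Rightarrow> (real \<Rightarrow> 'u) \<Rightarrow> bool" where
  "admissible_control U t u \<longleftrightarrow>
     u \<in> borel_measurable (lebesgue_on {-t..0}) \<and> (\<forall>s\<in>{-t..0}. u s \<in> U)"

definition trajectory ::
  "('a::euclidean_space \<Rightarrow> 'u \<Rightarrow> 'a) \<Rightarrow> 'a \<Rightarrow> real \<Rightarrow> (real \<Rightarrow> 'u) \<Rightarrow> (real \<Rightarrow> 'a) \<Rightarrow> bool" where
  "trajectory f x0 t u xs \<longleftrightarrow>
     xs (-t) = x0 \<and>
     (\<forall>s\<in>{-t..0}. ((\<lambda>\<tau>. f (xs \<tau>) (u \<tau>)) has_integral (xs s - x0)) {-t..s})"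

definition V_avoid ::
  "('a::euclidean_space \<Rightarrow> 'u::euclidean_space \<Rightarrow> 'a) \<Rightarrow> 'u set \<Rightarrow> ('a \<Rightarrow> real) \<Rightarrow> 'a \<Rightarrow> real \<Rightarrow> real" where
  "V_avoid f U g x t =
     Sup {Inf ((\<lambda>s. g (xs s)) ` {-t..0}) | u xs. admissible_control U t u \<and> trajectory f x t u xs}"

definition V_reach_avoid ::
  "('a::euclidean_space \<Rightarrow> 'u::euclidean_space \<Rightarrow> 'a) \<Rightarrow> 'u set \<Rightarrow> ('a \<Rightarrow> real) \<Rightarrow> ('a \<Rightarrow> real)
     \<Rightarrow> 'a \<Rightarrow> real \<Rightarrow> real" where
  "V_reach_avoid f U l g x t =
     Sup {Sup ((\<lambda>s. min (l (xs s)) (Inf ((\<lambda>\<tau>. g (xs \<tau>)) ` {-t..s}))) ` {-t..0})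
          | u xs. admissible_control U t u \<and> trajectory f x t u xs}"

definition H_hat ::
  "nat \<Rightarrow> (nat \<Rightarrow> 'a::euclidean_space) \<Rightarrow> (nat \<Rightarrow> 'a) \<Rightarrow> ('a \<Rightarrow> 'a \<Rightarrow> 'a set) \<Rightarrow> 'a \<Rightarrow> 'a \<Rightarrow> real" where
  "H_hat N xd vd E x p =
     Max ((\<lambda>i. Inf ((\<lambda>w. p \<bullet> w) ` {vd i + e | e. e \<in> E x (xd i)})) ` {1..N})"

text \<open>Left-hand operators of the variational inequalities, written exactly as in the paper:
  argument r stands for the value V(x,t), q for D_t V(x,t), p for D_x V(x,t);
  the equation is 0 = F x t r q p.\<close>
definition F_avoid :: "('a \<Rightarrow> real) \<Rightarrow> ('a \<Rightarrow> 'a \<Rightarrow> real) \<Rightarrow> 'a \<Rightarrow> real \<Rightarrow> real \<Rightarrow> real \<Rightarrow> 'a \<Rightarrow> real" where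
  "F_avoid g H x t r q p = min (g x - r) (- q + H x p)"

definition F_reach_avoid ::
  "('a \<Rightarrow> real) \<Rightarrow> ('a \<Rightarrow> real) \<Rightarrow> ('a \<Rightarrow> 'a \<Rightarrow> real) \<Rightarrow> 'a \<Rightarrow> real \<Rightarrow> real \<Rightarrow> real \<Rightarrow> 'a \<Rightarrow> real" where
  "F_reach_avoid l g H x t r q p = min (g x - r) (max (l x - r) (- q + H x p))"

definition C1_test ::
  "('a::euclidean_space \<Rightarrow> real \<Rightarrow> real) \<Rightarrow> ('a \<Rightarrow> real \<Rightarrow> 'a) \<Rightarrow> ('a \<Rightarrow> real \<Rightarrow> real) \<Rightarrow> bool" where
  "C1_test phi phix phit \<longleftrightarrow>
     (\<forall>x t. t > 0 \<longrightarrow>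
        ((\<lambda>z. phi (fst z) (snd z)) has_derivative (\<lambda>h. phix x t \<bullet> fst h + phit x t * snd h)) (at (x, t))) \<and>
     continuous_on (UNIV \<times> {0<..}) (\<lambda>z. phix (fst z) (snd z)) \<and>
     continuous_on (UNIV \<times> {0<..}) (\<lambda>z. phit (fst z) (snd z))"

definition local_max_at :: "('a::euclidean_space \<Rightarrow> real \<Rightarrow> real) \<Rightarrow> 'a \<Rightarrow> real \<Rightarrow> bool" where
  "local_max_at w x0 t0 \<longleftrightarrow>
     (\<exists>e>0. \<forall>y s. s > 0 \<and> dist (y, s) (x0, t0) < e \<longrightarrow> w y s \<le> w x0 t0)"

definition local_min_at :: "('a::euclidean_space \<Rightarrow> real \<Rightarrow> real) \<Rightarrow> 'a \<Rightarrow> real \<Rightarrow> bool" where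
  "local_min_at w x0 t0 \<longleftrightarrow>
     (\<exists>e>0. \<forall>y s. s > 0 \<and> dist (y, s) (x0, t0) < e \<longrightarrow> w x0 t0 \<le> w y s)"

text \<open>Since F (as written in the paper) is nonincreasing in r, the standard
  Crandall-Evans-Lions convention applied to the proper operator -F gives:
  subsolution: F >= 0 at local maxima of W - phi; supersolution: F <= 0 at local minima.\<close>
definition visc_subsolution ::
  "('a::euclidean_space \<Rightarrow> real \<Rightarrow> real \<Rightarrow> real \<Rightarrow> 'a \<Rightarrow> real) \<Rightarrow> ('a \<Rightarrow> real \<Rightarrow> real) \<Rightarrow> bool" where
  "visc_subsolution F W \<longleftrightarrow>
     (\<forall>phi phix phit x0 t0. C1_test phi phix phit \<and> t0 > 0 \<and>
        local_max_at (\<lambda>y s. W y s - phi y s) x0 t0 \<longrightarrow>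
        F x0 t0 (W x0 t0) (phit x0 t0) (phix x0 t0) \<ge> 0)"

definition visc_supersolution ::
  "('a::euclidean_space \<Rightarrow> real \<Rightarrow> real \<Rightarrow> real \<Rightarrow> 'a \<Rightarrow> real) \<Rightarrow> ('a \<Rightarrow> real \<Rightarrow> real) \<Rightarrow> bool" where
  "visc_supersolution F W \<longleftrightarrow>
     (\<forall>phi phix phit x0 t0. C1_test phi phix phit \<and> t0 > 0 \<and>
        local_min_at (\<lambda>y s. W y s - phi y s) x0 t0 \<longrightarrow>
        F x0 t0 (W x0 t0) (phit x0 t0) (phix x0 t0) \<le> 0)"

definition visc_solution ::
  "('a::euclidean_space \<Rightarrow> real \<Rightarrow> real \<Rightarrow> real \<Rightarrow> 'a \<Rightarrow> real) \<Rightarrow> ('a \<Rightarrow> real) \<Rightarrow> ('a \<Rightarrow> real \<Rightarrow> real) \<Rightarrow> bool" where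
  "visc_solution F W0 W \<longleftrightarrow>
     continuous_on (UNIV \<times> {0..}) (\<lambda>z. W (fst z) (snd z)) \<and>
     visc_subsolution F W \<and> visc_supersolution F W \<and> (\<forall>x. W x 0 = W0 x)"

end

theory Submission
  imports Defs
begin

text \<open>Validity of the uncertainty sets makes the data-driven Hamiltonian at most
  max_i p \<bullet> f(x, u^i), so the data-driven value function is a viscosity subsolution of the
  variational inequality of the system restricted to the finitely many data controls u^i. The
  true value function V, on the other hand, is superoptimal along each constant data control
  by dynamic programming. A comparison argument by doubling of variables, run on successive
  time windows of fixed length, gives the inequality. As V is not known to be continuous, the
  doubling only uses near maximizers in the V variable, and the penalty weight is taken from a
  geometric sequence along which the suprema have nearly stabilized instead of passing to a
  limit.\<close>

section \<open>Integral curves of Lipschitz vector fields\<close>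

lemma has_integral_primitive_continuous_on:
  fixes h :: "real \<Rightarrow> 'a::euclidean_space"
  assumes "\<forall>s\<in>{a..b}. (h has_integral (w s - x0)) {a..s}"
  shows "continuous_on {a..b} w"
proof (cases "a \<le> b")
  case True
  then have "h integrable_on {a..b}" using assms by auto
  then have "continuous_on {a..b} (\<lambda>s. x0 + integral {a..s} h)"
    by (intro continuous_intros indefinite_integral_continuous_1)
  moreover have "x0 + integral {a..s} h = w s" if "s \<in> {a..b}" for s
    using assms that by (metis atLeastAtMost_iff add.commute diff_add_cancel integral_unique)
  ultimately show ?thesis by (rule continuous_on_eq)
qed simp

lemma has_integral_primitive_append:
  fixes h :: "real \<Rightarrow> 'a::euclidean_space"
  assumes "\<forall>s\<in>{a..b}. (h has_integral (w s - x0)) {a..s}"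
    and "\<forall>s\<in>{b..c}. (h has_integral (w s - w b)) {b..s}"
    and "a \<le> b"
  shows "\<forall>s\<in>{a..c}. (h has_integral (w s - x0)) {a..s}"
proof
  fix s assume s: "s \<in> {a..c}"
  show "(h has_integral (w s - x0)) {a..s}"
  proof (cases "s \<le> b")
    case False
    have "(h has_integral (w b - x0 + (w s - w b))) {a..s}"
      using assms False s by (intro has_integral_combine[of a b s]) auto
    then show ?thesis by simp
  qed (use assms s in auto)
qed

definition integral_curve :: "('a::euclidean_space \<Rightarrow> 'a) \<Rightarrow> 'a \<Rightarrow> real \<Rightarrow> real \<Rightarrow> (real \<Rightarrow> 'a) \<Rightarrow> bool" where
  "integral_curve F x0 a b w \<longleftrightarrow>
     w a = x0 \<and> (\<forall>s\<in>{a..b}. ((\<lambda>\<tau>. F (w \<tau>)) has_integral (w s - x0)) {a..s})"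

lemma trajectory_const_control_iff:
  "trajectory f x0 t (\<lambda>_. c) w \<longleftrightarrow> integral_curve (\<lambda>x. f x c) x0 (-t) 0 w"
  by (simp add: trajectory_def integral_curve_def)

lemma integral_curve_continuous_on:
  "integral_curve F x0 a b w \<Longrightarrow> continuous_on {a..b} w"
  unfolding integral_curve_def by (blast intro: has_integral_primitive_continuous_on)

lemma integral_curve_restrict:
  "integral_curve F x0 a b w \<Longrightarrow> b' \<le> b \<Longrightarrow> integral_curve F x0 a b' w"
  by (auto simp: integral_curve_def)

lemma integral_curve_append:
  assumes w1: "integral_curve F x0 a b w1" and w2: "integral_curve F (w1 b) b c w2" and "a \<le> b"
  shows "integral_curve F x0 a c (\<lambda>s. if s \<le> b then w1 s else w2 s)"
proof -
  define w where "w s = (if s \<le> b then w1 s else w2 s)" for s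
  have first: "((\<lambda>\<tau>. F (w \<tau>)) has_integral (w s - x0)) {a..s}" if s: "s \<in> {a..b}" for s
  proof -
    have "((\<lambda>\<tau>. F (w1 \<tau>)) has_integral (w1 s - x0)) {a..s}"
      using w1 s by (simp add: integral_curve_def)
    moreover have "w s = w1 s" "\<And>\<tau>. \<tau> \<in> {a..s} \<Longrightarrow> F (w1 \<tau>) = F (w \<tau>)"
      using s by (auto simp: w_def)
    ultimately show ?thesis by (metis has_integral_eq)
  qed
  have second: "((\<lambda>\<tau>. F (w \<tau>)) has_integral (w s - w b)) {b..s}" if s: "s \<in> {b..c}" for s
  proof -
    have "((\<lambda>\<tau>. F (w2 \<tau>)) has_integral (w2 s - w1 b)) {b..s}"
      using w2 s by (simp add: integral_curve_def)
    moreover have "w s - w b = w2 s - w1 b"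
      using w2 s by (auto simp: w_def integral_curve_def)
    moreover have "\<And>\<tau>. \<tau> \<in> {b..s} \<Longrightarrow> F (w2 \<tau>) = F (w \<tau>)"
      using w2 by (auto simp: w_def integral_curve_def)
    ultimately show ?thesis by (metis has_integral_eq)
  qed
  have "\<forall>s\<in>{a..c}. ((\<lambda>\<tau>. F (w \<tau>)) has_integral (w s - x0)) {a..s}"
    by (rule has_integral_primitive_append[OF _ _ \<open>a \<le> b\<close>]) (use first second in blast)+
  moreover have "w a = x0" using w1 \<open>a \<le> b\<close> by (simp add: w_def integral_curve_def)
  ultimately show ?thesis by (simp add: integral_curve_def w_def[abs_def])
qed

lemma picard_operator_exists:
  fixes F :: "'a::euclidean_space \<Rightarrow> 'a"
  assumes Fc: "continuous_on UNIV F"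
  shows "\<exists>T :: (real \<Rightarrow>\<^sub>C 'a) \<Rightarrow> (real \<Rightarrow>\<^sub>C 'a). \<forall>v s.
    apply_bcontfun (T v) s = x0 + integral {a..clamp a b s} (\<lambda>\<tau>. F (apply_bcontfun v \<tau>))"
proof -
  have "\<exists>Tv :: real \<Rightarrow>\<^sub>C 'a. \<forall>s. Tv s = x0 + integral {a..clamp a b s} (\<lambda>\<tau>. F (v \<tau>))"
    for v :: "real \<Rightarrow>\<^sub>C 'a"
  proof -
    have "(\<lambda>\<tau>. F (v \<tau>)) integrable_on {a..b}"
      by (intro integrable_continuous_interval continuous_on_compose2[OF Fc]) auto
    then have "continuous_on (cbox a b) (\<lambda>s. x0 + integral {a..s} (\<lambda>\<tau>. F (v \<tau>)))"
      by (auto intro!: continuous_intros indefinite_integral_continuous_1)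
    then show ?thesis by (rule continuous_on_cbox_bcontfunE) blast
  qed
  then show ?thesis by metis
qed

lemma integral_curve_exists_short:
  fixes F :: "'a::euclidean_space \<Rightarrow> 'a"
  assumes lip: "L-lipschitz_on UNIV F" and ab: "a \<le> b" and short: "L * (b - a) < 1"
  shows "\<exists>w. integral_curve F x0 a b w"
proof -
  have L0: "L \<ge> 0" using lip by (simp add: lipschitz_on_def)
  have Fc: "continuous_on UNIV F" using lipschitz_on_continuous_on[OF lip] .
  have int: "(\<lambda>\<tau>. F (v \<tau>)) integrable_on {a..s}" for v :: "real \<Rightarrow>\<^sub>C 'a" and s
    by (intro integrable_continuous_interval continuous_on_compose2[OF Fc]) auto
  obtain T :: "(real \<Rightarrow>\<^sub>C 'a) \<Rightarrow> (real \<Rightarrow>\<^sub>C 'a)"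
    where T: "\<And>v s. T v s = x0 + integral {a..clamp a b s} (\<lambda>\<tau>. F (v \<tau>))"
    using picard_operator_exists[OF Fc] by blast
  have "dist (T v) (T v') \<le> (L * (b - a)) * dist v v'" for v v'
  proof (rule dist_bound)
    fix s
    define c where "c = clamp a b s"
    have c: "c \<in> {a..b}" using ab clamp_in_interval[of a b s] by (simp add: c_def)
    have "dist (T v s) (T v' s) = norm (integral {a..c} (\<lambda>\<tau>. F (v \<tau>) - F (v' \<tau>)))"
      by (simp add: T c_def dist_norm integral_diff[OF int int])
    also have "\<dots> \<le> (L * dist v v') * (c - a)"
    proof (rule integral_bound)
      show "continuous_on {a..c} (\<lambda>\<tau>. F (v \<tau>) - F (v' \<tau>))"
        by (intro continuous_intros continuous_on_compose2[OF Fc]) auto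
      fix \<tau>
      have "norm (F (v \<tau>) - F (v' \<tau>)) \<le> L * dist (v \<tau>) (v' \<tau>)"
        using lip by (simp add: lipschitz_on_def dist_norm)
      also have "\<dots> \<le> L * dist v v'" by (intro mult_left_mono dist_bounded L0)
      finally show "norm (F (v \<tau>) - F (v' \<tau>)) \<le> L * dist v v'" .
    qed (use c in simp)
    also have "\<dots> \<le> (L * (b - a)) * dist v v'"
      using c L0 by (simp add: mult_left_mono mult_right_mono mult.commute mult.left_commute)
    finally show "dist (T v s) (T v' s) \<le> (L * (b - a)) * dist v v'" .
  qed
  then obtain w where w: "T w = w"
    using banach_fix_type[of "L * (b - a)" T] L0 ab short by auto
  have "w s = x0 + integral {a..s} (\<lambda>\<tau>. F (w \<tau>))" if "s \<in> {a..b}" for s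
    using T[of w s] that by (simp add: w)
  then have "integral_curve F x0 a b w"
    using int[of w] ab by (auto simp: integral_curve_def)
  then show ?thesis by blast
qed

lemma integral_curve_exists:
  fixes F :: "'a::euclidean_space \<Rightarrow> 'a"
  assumes lip: "L-lipschitz_on UNIV F" and ab: "a \<le> b"
  shows "\<exists>w. integral_curve F x0 a b w"
proof -
  have L0: "L \<ge> 0" using lip by (simp add: lipschitz_on_def)
  define d where "d = 1 / (L + 1)"
  have d: "d > 0" "L * d < 1" using L0 by (auto simp: d_def field_simps)
  have "\<exists>w. integral_curve F x0 a (a + real n * d) w" for n
  proof (induction n)
    case 0
    show ?case by (intro exI[of _ "\<lambda>_. x0"]) (simp add: integral_curve_def has_integral_refl)
  next
    case (Suc n)
    then obtain w1 where w1: "integral_curve F x0 a (a + real n * d) w1" by blast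
    obtain w2 where "integral_curve F (w1 (a + real n * d)) (a + real n * d) (a + real n * d + d) w2"
      using integral_curve_exists_short[OF lip] d by fastforce
    then have "integral_curve F x0 a (a + real n * d + d) (\<lambda>s. if s \<le> a + real n * d then w1 s else w2 s)"
      using integral_curve_append[OF w1] d by simp
    then show ?case by (auto simp: algebra_simps)
  qed
  moreover obtain n where "(b - a) / d < real n" using reals_Archimedean2 by blast
  then have "b \<le> a + real n * d" using d by (simp add: field_simps)
  ultimately show ?thesis using integral_curve_restrict by blast
qed

lemma integral_curve_integral:
  "integral_curve F x0 a b w \<Longrightarrow> s \<in> {a..b} \<Longrightarrow> integral {a..s} (\<lambda>\<tau>. F (w \<tau>)) = w s - x0"
  by (auto simp: integral_curve_def intro: integral_unique)

lemma integral_curve_norm_le: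
  fixes F :: "'a::euclidean_space \<Rightarrow> 'a"
  assumes lip: "L-lipschitz_on UNIV F" and w: "integral_curve F x0 a b w"
    and short: "L * (b - a) \<le> 1/2" and s: "s \<in> {a..b}"
  shows "norm (w s - x0) \<le> 2 * norm (F x0) * (s - a)"
proof -
  have L0: "L \<ge> 0" using lip by (simp add: lipschitz_on_def)
  have cw: "continuous_on {a..s} w"
    using integral_curve_continuous_on[OF integral_curve_restrict[OF w, of s]] s by simp
  have cFw: "continuous_on {a..s} (\<lambda>\<tau>. F (w \<tau>))"
    using continuous_on_compose2[OF lipschitz_on_continuous_on[OF lip] cw] by simp
  have "continuous_on {a..s} (\<lambda>\<tau>. norm (w \<tau> - x0))" using cw by (intro continuous_intros)
  then obtain t where t: "t \<in> {a..s}" and tmax: "\<forall>\<tau>\<in>{a..s}. norm (w \<tau> - x0) \<le> norm (w t - x0)"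
    using continuous_attains_sup[of "{a..s}" "\<lambda>\<tau>. norm (w \<tau> - x0)"] s by auto
  define m where "m = norm (w t - x0)"
  have "m = norm (integral {a..t} (\<lambda>\<tau>. F (w \<tau>)))"
    using integral_curve_integral[OF w, of t] t s by (simp add: m_def)
  also have "\<dots> \<le> (norm (F x0) + L * m) * (t - a)"
  proof (rule integral_bound)
    show "continuous_on {a..t} (\<lambda>\<tau>. F (w \<tau>))" using continuous_on_subset[OF cFw] t by auto
    fix \<tau> assume \<tau>: "\<tau> \<in> {a..t}"
    have "norm (F (w \<tau>)) \<le> norm (F x0) + norm (F (w \<tau>) - F x0)" by (rule norm_triangle_sub)
    also have "norm (F (w \<tau>) - F x0) \<le> L * norm (w \<tau> - x0)"
      using lip by (simp add: lipschitz_on_def dist_norm)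
    also have "\<dots> \<le> L * m" using tmax \<tau> t by (intro mult_left_mono L0) (auto simp: m_def)
    finally show "norm (F (w \<tau>)) \<le> norm (F x0) + L * m" by simp
  qed (use t in simp)
  also have "\<dots> \<le> (norm (F x0) + L * m) * (s - a)"
    using t L0 by (intro mult_left_mono) (auto simp: m_def)
  also have "\<dots> \<le> norm (F x0) * (s - a) + m / 2"
  proof -
    have "L * (s - a) \<le> 1/2" using short s L0 by (smt (verit) atLeastAtMost_iff mult_left_mono)
    then have "m * (L * (s - a)) \<le> m * (1/2)" by (intro mult_left_mono) (simp_all add: m_def)
    then show ?thesis by (simp add: algebra_simps)
  qed
  finally have "m \<le> 2 * norm (F x0) * (s - a)" by simp
  moreover have "norm (w s - x0) \<le> m" using tmax s by (auto simp: m_def)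
  ultimately show ?thesis by simp
qed

lemma integral_curve_taylor:
  fixes F :: "'a::euclidean_space \<Rightarrow> 'a"
  assumes lip: "L-lipschitz_on UNIV F" and w: "integral_curve F x0 a b w"
    and short: "L * (b - a) \<le> 1/2" and s: "s \<in> {a..b}"
  shows "norm (w s - x0 - (s - a) *\<^sub>R F x0) \<le> 2 * L * norm (F x0) * (s - a)^2"
proof -
  have L0: "L \<ge> 0" using lip by (simp add: lipschitz_on_def)
  have cw: "continuous_on {a..s} w"
    using integral_curve_continuous_on[OF integral_curve_restrict[OF w, of s]] s by simp
  have "w s - x0 - (s - a) *\<^sub>R F x0 = integral {a..s} (\<lambda>\<tau>. F (w \<tau>) - F x0)"
    using integral_curve_integral[OF w s] s w
    by (subst integral_diff) (auto simp: integral_curve_def)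
  also have "norm \<dots> \<le> (L * (2 * norm (F x0) * (s - a))) * (s - a)"
  proof (rule integral_bound)
    show "continuous_on {a..s} (\<lambda>\<tau>. F (w \<tau>) - F x0)"
      using continuous_on_compose2[OF lipschitz_on_continuous_on[OF lip] cw]
      by (auto intro: continuous_intros)
    fix \<tau> assume \<tau>: "\<tau> \<in> {a..s}"
    have "norm (F (w \<tau>) - F x0) \<le> L * norm (w \<tau> - x0)"
      using lip by (simp add: lipschitz_on_def dist_norm)
    also have "norm (w \<tau> - x0) \<le> 2 * norm (F x0) * (\<tau> - a)"
      using integral_curve_norm_le[OF lip w short] \<tau> s by simp
    also have "\<dots> \<le> 2 * norm (F x0) * (s - a)" using \<tau> by (intro mult_left_mono) auto
    finally show "norm (F (w \<tau>) - F x0) \<le> L * (2 * norm (F x0) * (s - a))"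
      using L0 by (simp add: mult_left_mono)
  qed (use s in simp)
  finally show ?thesis by (simp add: power2_eq_square mult.assoc)
qed

section \<open>Payoffs and dynamic programming\<close>

lemma admissible_control_append:
  fixes u :: "real \<Rightarrow> 'u::euclidean_space"
  assumes c: "c \<in> U" and ab: "a \<le> b" and u: "admissible_control U (-b) u"
  shows "admissible_control U (-a) (\<lambda>\<tau>. if \<tau> < b then c else u \<tau>)"
proof -
  have "restrict_space (lebesgue_on {a..0}) {\<tau>. \<not> \<tau> < b} = lebesgue_on ({a..0} \<inter> {\<tau>. \<not> \<tau> < b})"
    by (rule restrict_restrict_space) auto
  also have "{a..0} \<inter> {\<tau>. \<not> \<tau> < b} = {b..0}" using ab by auto
  finally have "(\<lambda>\<tau>. if \<tau> < b then c else u \<tau>) \<in> borel_measurable (lebesgue_on {a..0})"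
    using u by (subst measurable_If_restrict_space_iff)
      (auto simp: admissible_control_def sets_restrict_space_iff space_restrict_space)
  then show ?thesis using c u by (auto simp: admissible_control_def)
qed

lemma trajectory_append:
  assumes w: "integral_curve (\<lambda>x. f x c) x a b w" and v: "trajectory f (w b) (-b) u v"
    and ab: "a \<le> b"
  shows "trajectory f x (-a) (\<lambda>\<tau>. if \<tau> < b then c else u \<tau>) (\<lambda>s. if s \<le> b then w s else v s)"
proof -
  define u' where "u' \<tau> = (if \<tau> < b then c else u \<tau>)" for \<tau>
  define w' where "w' s = (if s \<le> b then w s else v s)" for s
  have first: "((\<lambda>\<tau>. f (w' \<tau>) (u' \<tau>)) has_integral (w' s - x)) {a..s}" if s: "s \<in> {a..b}" for s
  proof -
    have hw: "((\<lambda>\<tau>. f (w \<tau>) c) has_integral (w s - x)) {a..s}"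
      using w s by (simp add: integral_curve_def)
    have "((\<lambda>\<tau>. f (w' \<tau>) (u' \<tau>)) has_integral (w s - x)) {a..s}"
      by (rule has_integral_spike_finite[where S="{b}", OF _ _ hw])
        (use s in \<open>auto simp: w'_def u'_def\<close>)
    moreover have "w' s = w s" using s by (simp add: w'_def)
    ultimately show ?thesis by simp
  qed
  have second: "((\<lambda>\<tau>. f (w' \<tau>) (u' \<tau>)) has_integral (w' s - w' b)) {b..s}" if s: "s \<in> {b..0}" for s
  proof -
    have "((\<lambda>\<tau>. f (v \<tau>) (u \<tau>)) has_integral (v s - w b)) {b..s}"
      using v s by (simp add: trajectory_def)
    then have "((\<lambda>\<tau>. f (w' \<tau>) (u' \<tau>)) has_integral (v s - w b)) {b..s}"
      by (rule has_integral_eq[rotated]) (use v in \<open>auto simp: w'_def u'_def trajectory_def\<close>)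
    moreover have "w' s - w' b = v s - w b" using v s by (auto simp: w'_def trajectory_def)
    ultimately show ?thesis by simp
  qed
  have "\<forall>s\<in>{a..0}. ((\<lambda>\<tau>. f (w' \<tau>) (u' \<tau>)) has_integral (w' s - x)) {a..s}"
    by (rule has_integral_primitive_append[OF _ _ ab]) (use first second in blast)+
  moreover have "w' a = x" using w ab by (simp add: w'_def integral_curve_def)
  ultimately show ?thesis using ab by (simp add: trajectory_def w'_def[abs_def] u'_def[abs_def])
qed

lemma trajectory_continuous_on: "trajectory f x t u w \<Longrightarrow> continuous_on {-t..0} w"
  unfolding trajectory_def by (blast intro: has_integral_primitive_continuous_on)

lemma trajectory_const_control_exists:
  assumes "L-lipschitz_on UNIV (\<lambda>x. f x c)" and "t \<ge> 0"
  shows "\<exists>w. trajectory f x t (\<lambda>_. c) w"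
  using integral_curve_exists[OF assms(1), of "-t" 0 x] assms(2)
  by (simp add: trajectory_const_control_iff)

lemma admissible_const_control: "c \<in> U \<Longrightarrow> admissible_control U t (\<lambda>_. c)"
  by (simp add: admissible_control_def)

lemma bdd_below_continuous_image_interval:
  fixes \<phi> :: "real \<Rightarrow> real"
  shows "continuous_on {p..q} \<phi> \<Longrightarrow> bdd_below (\<phi> ` {p..q})"
  by (intro bounded_imp_bdd_below compact_imp_bounded compact_continuous_image) auto

lemma Inf_image_interval_split:
  fixes \<phi> :: "real \<Rightarrow> real"
  assumes "continuous_on {p..q} \<phi>" and r: "r \<in> {p..q}"
  shows "Inf (\<phi> ` {p..q}) = min (Inf (\<phi> ` {p..r})) (Inf (\<phi> ` {r..q}))"
proof -
  have "{p..q} = {p..r} \<union> {r..q}" using r by auto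
  then have "Inf (\<phi> ` {p..q}) = Inf (\<phi> ` {p..r} \<union> \<phi> ` {r..q})" by (simp add: image_Un)
  also have "\<dots> = inf (Inf (\<phi> ` {p..r})) (Inf (\<phi> ` {r..q}))"
    using assms by (intro cInf_union_distrib bdd_below_continuous_image_interval)
      (auto elim: continuous_on_subset)
  finally show ?thesis by (simp add: inf_min)
qed

lemma min_cSup_le:
  fixes S :: "real set"
  assumes "S \<noteq> {}" and "\<And>p. p \<in> S \<Longrightarrow> min m p \<le> B"
  shows "min m (Sup S) \<le> B"
proof (cases "m \<le> B")
  case False
  then have "Sup S \<le> B" using assms by (intro cSup_least) (auto simp: min_le_iff_disj)
  then show ?thesis by simp
qed simp

definition value_function ::
  "(real \<Rightarrow> (real \<Rightarrow> 'a) \<Rightarrow> real) \<Rightarrow> ('a::euclidean_space \<Rightarrow> 'u::euclidean_space \<Rightarrow> 'a) \<Rightarrow> 'u set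
     \<Rightarrow> 'a \<Rightarrow> real \<Rightarrow> real" where
  "value_function P f U x t = Sup {P t w | u w. admissible_control U t u \<and> trajectory f x t u w}"

definition avoid_payoff :: "('a \<Rightarrow> real) \<Rightarrow> real \<Rightarrow> (real \<Rightarrow> 'a) \<Rightarrow> real" where
  "avoid_payoff g t w = Inf ((\<lambda>s. g (w s)) ` {-t..0})"

definition reach_avoid_payoff :: "('a \<Rightarrow> real) \<Rightarrow> ('a \<Rightarrow> real) \<Rightarrow> real \<Rightarrow> (real \<Rightarrow> 'a) \<Rightarrow> real" where
  "reach_avoid_payoff l g t w = Sup ((\<lambda>s. min (l (w s)) (Inf ((\<lambda>\<tau>. g (w \<tau>)) ` {-t..s}))) ` {-t..0})"

lemma V_avoid_eq: "V_avoid f U g = value_function (avoid_payoff g) f U"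
  by (simp add: fun_eq_iff V_avoid_def value_function_def avoid_payoff_def)

lemma V_reach_avoid_eq: "V_reach_avoid f U l g = value_function (reach_avoid_payoff l g) f U"
  by (simp add: fun_eq_iff V_reach_avoid_def value_function_def reach_avoid_payoff_def)

text \<open>The avoid and reach-avoid payoffs, abstracted to what dynamic programming uses.\<close>

locale payoff =
  fixes P :: "real \<Rightarrow> (real \<Rightarrow> 'a::euclidean_space) \<Rightarrow> real" and g :: "'a \<Rightarrow> real"
  assumes payoff_le: "t \<ge> 0 \<Longrightarrow> continuous_on {-t..0} w \<Longrightarrow> P t w \<le> g (w (-t))"
    and payoff_cong: "(\<And>s. s \<in> {-t..0} \<Longrightarrow> w s = w' s) \<Longrightarrow> P t w = P t w'"
    and payoff_split: "0 < h \<Longrightarrow> h \<le> t \<Longrightarrow> continuous_on {-t..0} w \<Longrightarrow>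
      min (Inf ((\<lambda>\<tau>. g (w \<tau>)) ` {-t..-t+h})) (P (t - h) w) \<le> P t w"
begin

lemma payoffs_bdd_above:
  assumes "t \<ge> 0"
  shows "bdd_above {P t w | u w. admissible_control U t u \<and> trajectory f x t u w}"
proof (rule bdd_aboveI)
  fix p assume "p \<in> {P t w | u w. admissible_control U t u \<and> trajectory f x t u w}"
  then obtain u w where "p = P t w" and w: "trajectory f x t u w" by blast
  then show "p \<le> g x"
    using payoff_le[OF assms trajectory_continuous_on[OF w]] w by (simp add: trajectory_def)
qed

lemma payoff_le_value:
  assumes "t \<ge> 0" and "admissible_control U t u" and "trajectory f x t u w"
  shows "P t w \<le> value_function P f U x t"
  unfolding value_function_def using assms by (intro cSup_upper payoffs_bdd_above) auto

lemma value_ge: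
  assumes lip: "L-lipschitz_on UNIV (\<lambda>x. f x c)" and c: "c \<in> U" and t: "t \<ge> 0"
    and m: "\<And>w. continuous_on {-t..0} w \<Longrightarrow> w (-t) = x \<Longrightarrow> m \<le> P t w"
  shows "m \<le> value_function P f U x t"
proof -
  obtain w where w: "trajectory f x t (\<lambda>_. c) w"
    using trajectory_const_control_exists[where f=f and c=c, OF lip t] by blast
  then have "m \<le> P t w" using m trajectory_continuous_on[OF w] by (simp add: trajectory_def)
  also have "\<dots> \<le> value_function P f U x t"
    using payoff_le_value[OF t admissible_const_control[OF c] w] .
  finally show ?thesis .
qed

text \<open>Dynamic programming, in the only direction needed: following a constant control c
  for a time h and then acting optimally is admissible.\<close>

lemma value_superoptimal:
  assumes lip: "L-lipschitz_on UNIV (\<lambda>x. f x c)" and c: "c \<in> U" and h: "0 < h" "h \<le> s"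
  shows "\<exists>z. integral_curve (\<lambda>x. f x c) y (-s) (-s+h) z \<and>
    min (Inf ((\<lambda>\<tau>. g (z \<tau>)) ` {-s..-s+h})) (value_function P f U (z (-s+h)) (s - h))
      \<le> value_function P f U y s"
proof -
  define b where "b = -s + h"
  have sb: "-s \<le> b" "b \<le> 0" "-b = s - h" using h by (auto simp: b_def)
  obtain z where z: "integral_curve (\<lambda>x. f x c) y (-s) b z"
    using integral_curve_exists[OF lip sb(1)] by blast
  let ?m = "Inf ((\<lambda>\<tau>. g (z \<tau>)) ` {-s..b})"
  have "min ?m (value_function P f U (z b) (s - h)) \<le> value_function P f U y s"
    unfolding value_function_def[of P f U "z b"]
  proof (rule min_cSup_le)
    obtain v where "trajectory f (z b) (s - h) (\<lambda>_. c) v"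
      using trajectory_const_control_exists[where f=f and c=c and x="z b" and t="s - h", OF lip] h
      by auto
    then show "{P (s - h) v | u v. admissible_control U (s - h) u \<and> trajectory f (z b) (s - h) u v} \<noteq> {}"
      using admissible_const_control[OF c] by blast
  next
    fix p assume "p \<in> {P (s - h) v | u v. admissible_control U (s - h) u \<and> trajectory f (z b) (s - h) u v}"
    then obtain u v where p: "p = P (s - h) v" and u: "admissible_control U (-b) u"
      and v: "trajectory f (z b) (-b) u v" using sb by auto
    define G where "G r = (if r \<le> b then z r else v r)" for r
    have G: "trajectory f y s (\<lambda>\<tau>. if \<tau> < b then c else u \<tau>) G"
      using trajectory_append[OF z v sb(1)] by (simp add: G_def[abs_def])
    have "v r = G r" if "r \<in> {-(s - h)..0}" for r
    proof (cases "r \<le> b")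
      case True
      then have "r = b" using that sb by auto
      then show ?thesis using v by (simp add: G_def trajectory_def)
    qed (simp add: G_def)
    then have "P (s - h) v = P (s - h) G" by (rule payoff_cong)
    moreover have "?m = Inf ((\<lambda>\<tau>. g (G \<tau>)) ` {-s..-s+h})"
      by (intro arg_cong[where f=Inf] image_cong) (auto simp: G_def b_def)
    ultimately have "min ?m p = min (Inf ((\<lambda>\<tau>. g (G \<tau>)) ` {-s..-s+h})) (P (s - h) G)"
      by (simp add: p)
    also have "\<dots> \<le> P s G" using payoff_split[OF h trajectory_continuous_on[OF G]] .
    also have "\<dots> \<le> value_function P f U y s"
      using admissible_control_append[OF c sb(1) u] G h by (intro payoff_le_value) auto
    finally show "min ?m p \<le> value_function P f U y s" .
  qed
  then show ?thesis using z by (auto simp: b_def)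
qed

end

lemma payoff_avoid:
  fixes g :: "'a::euclidean_space \<Rightarrow> real"
  assumes g: "continuous_on UNIV g"
  shows "payoff (avoid_payoff g) g"
proof
  have cont: "continuous_on {p..q} (\<lambda>\<tau>. g (w \<tau>))" if "continuous_on {-t..0} w" "{p..q} \<subseteq> {-t..0}"
    for w :: "real \<Rightarrow> 'a" and t p q
    using continuous_on_compose2[OF g continuous_on_subset[OF that]] by auto
  fix t :: real and w :: "real \<Rightarrow> 'a"
  assume "t \<ge> 0" "continuous_on {-t..0} w"
  then show "avoid_payoff g t w \<le> g (w (-t))"
    unfolding avoid_payoff_def using cont by (intro cInf_lower bdd_below_continuous_image_interval) auto
next
  fix t :: real and w w' :: "real \<Rightarrow> 'a"
  show "(\<And>s. s \<in> {-t..0} \<Longrightarrow> w s = w' s) \<Longrightarrow> avoid_payoff g t w = avoid_payoff g t w'"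
    unfolding avoid_payoff_def by (metis (mono_tags, lifting) image_cong)
next
  fix h t :: real and w :: "real \<Rightarrow> 'a"
  assume h: "0 < h" "h \<le> t" and w: "continuous_on {-t..0} w"
  have "continuous_on {-t..0} (\<lambda>\<tau>. g (w \<tau>))" using continuous_on_compose2[OF g w] by auto
  then show "min (Inf ((\<lambda>\<tau>. g (w \<tau>)) ` {-t..-t+h})) (avoid_payoff g (t - h) w) \<le> avoid_payoff g t w"
    unfolding avoid_payoff_def using h by (subst Inf_image_interval_split[where r="-t+h"]) auto
qed

lemma payoff_reach_avoid:
  fixes g :: "'a::euclidean_space \<Rightarrow> real"
  assumes g: "continuous_on UNIV g"
  shows "payoff (reach_avoid_payoff l g) g"
proof
  fix t :: real and w :: "real \<Rightarrow> 'a"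
  assume t: "t \<ge> 0" and w: "continuous_on {-t..0} w"
  have "Inf ((\<lambda>\<tau>. g (w \<tau>)) ` {-t..s}) \<le> g (w (-t))" if "s \<in> {-t..0}" for s
    using that continuous_on_compose2[OF g continuous_on_subset[OF w]]
    by (intro cInf_lower bdd_below_continuous_image_interval) auto
  then show "reach_avoid_payoff l g t w \<le> g (w (-t))"
    unfolding reach_avoid_payoff_def using t by (intro cSup_least) (auto simp: min_le_iff_disj)
next
  fix t :: real and w w' :: "real \<Rightarrow> 'a"
  assume "\<And>s. s \<in> {-t..0} \<Longrightarrow> w s = w' s"
  then show "reach_avoid_payoff l g t w = reach_avoid_payoff l g t w'"
    unfolding reach_avoid_payoff_def by (intro arg_cong[where f=Sup] image_cong refl) auto
next
  fix h t :: real and w :: "real \<Rightarrow> 'a"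
  assume h: "0 < h" "h \<le> t" and w: "continuous_on {-t..0} w"
  define m where "m = Inf ((\<lambda>\<tau>. g (w \<tau>)) ` {-t..-t+h})"
  define \<phi> where "\<phi> t' s = min (l (w s)) (Inf ((\<lambda>\<tau>. g (w \<tau>)) ` {-t'..s}))" for t' s
  have bdd: "bdd_above (\<phi> t ` {-t..0})"
  proof (rule bdd_aboveI2)
    fix s assume "s \<in> {-t..0}"
    then show "\<phi> t s \<le> g (w (-t))"
      unfolding \<phi>_def using continuous_on_compose2[OF g continuous_on_subset[OF w]]
      by (intro min.coboundedI2 cInf_lower bdd_below_continuous_image_interval) auto
  qed
  have "min m (Sup (\<phi> (t - h) ` {-(t - h)..0})) \<le> Sup (\<phi> t ` {-t..0})"
  proof (rule min_cSup_le)
    fix p assume "p \<in> \<phi> (t - h) ` {-(t - h)..0}"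
    then obtain s where s: "s \<in> {-t+h..0}" and p: "p = \<phi> (t - h) s" by auto
    have "Inf ((\<lambda>\<tau>. g (w \<tau>)) ` {-t..s}) = min m (Inf ((\<lambda>\<tau>. g (w \<tau>)) ` {-t+h..s}))"
      unfolding m_def using s h continuous_on_compose2[OF g continuous_on_subset[OF w]]
      by (intro Inf_image_interval_split) auto
    then have "min m p = \<phi> t s" by (simp add: p \<phi>_def min.left_commute)
    also have "\<dots> \<le> Sup (\<phi> t ` {-t..0})" using s h by (intro cSup_upper bdd) auto
    finally show "min m p \<le> Sup (\<phi> t ` {-t..0})" .
  qed (use h in auto)
  then show "min (Inf ((\<lambda>\<tau>. g (w \<tau>)) ` {-t..-t+h})) (reach_avoid_payoff l g (t - h) w)
      \<le> reach_avoid_payoff l g t w"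
    by (simp add: reach_avoid_payoff_def m_def \<phi>_def)
qed

lemma avoid_payoff_zero: "avoid_payoff g 0 w = g (w 0)"
  by (simp add: avoid_payoff_def)

lemma reach_avoid_payoff_ge_start:
  fixes g :: "'a::euclidean_space \<Rightarrow> real"
  assumes g: "continuous_on UNIV g" and t: "0 \<le> t" and w: "continuous_on {-t..0} w"
  shows "min (l (w (-t))) (g (w (-t))) \<le> reach_avoid_payoff l g t w"
proof -
  have "bdd_above ((\<lambda>s. min (l (w s)) (Inf ((\<lambda>\<tau>. g (w \<tau>)) ` {-t..s}))) ` {-t..0})"
  proof (rule bdd_aboveI2)
    fix s assume "s \<in> {-t..0}"
    then show "min (l (w s)) (Inf ((\<lambda>\<tau>. g (w \<tau>)) ` {-t..s})) \<le> g (w (-t))"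
      using continuous_on_compose2[OF g continuous_on_subset[OF w]]
      by (intro min.coboundedI2 cInf_lower bdd_below_continuous_image_interval) auto
  qed
  then have "min (l (w (-t))) (Inf ((\<lambda>\<tau>. g (w \<tau>)) ` {-t..-t})) \<le> reach_avoid_payoff l g t w"
    unfolding reach_avoid_payoff_def using t by (intro cSup_upper imageI) auto
  then show ?thesis by simp
qed

section \<open>Penalization and test functions\<close>

lemma decseq_small_step:
  fixes M :: "nat \<Rightarrow> real"
  assumes "\<And>k. M (Suc k) \<le> M k" and "\<And>k. m \<le> M k" and "0 < \<epsilon>"
  shows "\<exists>k. M k - M (Suc k) \<le> \<epsilon>"
proof -
  have "decseq M" using assms(1) by (simp add: decseq_Suc_iff)
  then obtain c where "M \<longlonglongrightarrow> c" using decseq_convergent[of M m] assms(2) by blast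
  then have "(\<lambda>k. M k - M (Suc k)) \<longlonglongrightarrow> 0" using LIMSEQ_Suc tendsto_diff by fastforce
  then have "\<forall>\<^sub>F k in sequentially. M k - M (Suc k) < \<epsilon>"
    using assms(3) by (auto dest: order_tendstoD)
  then show ?thesis by (meson eventually_sequentially less_imp_le order_refl)
qed

text \<open>Doubling of variables without a limit in the penalty: the value function is not known
  to be continuous, so instead of passing to the limit we pick, for a doubling weight of the
  form 2^k, a step where the supremum drops by less than the tolerance.\<close>

lemma penalization_concentrates:
  fixes G D :: "'p \<Rightarrow> real"
  assumes p0: "p0 \<in> S" "D p0 = 0" and G_le: "\<And>p. p \<in> S \<Longrightarrow> G p \<le> B"
    and D_nonneg: "\<And>p. p \<in> S \<Longrightarrow> 0 \<le> D p" and \<kappa>: "0 < \<kappa>"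
  shows "\<exists>lam\<ge>2. \<forall>p\<in>S.
    Sup ((\<lambda>p. G p - lam * D p) ` S) - \<kappa>/2 < G p - lam * D p \<longrightarrow> lam * D p \<le> 2 * \<kappa>"
proof -
  define M where "M k = Sup ((\<lambda>p. G p - 2^k * D p) ` S)" for k :: nat
  have bdd: "bdd_above ((\<lambda>p. G p - 2^k * D p) ` S)" for k :: nat
    using G_le D_nonneg by (intro bdd_aboveI2[where M=B]) (smt (verit) mult_nonneg_nonneg zero_le_power)
  have M_upper: "G p - 2^k * D p \<le> M k" if "p \<in> S" for p k
    unfolding M_def using that bdd by (intro cSup_upper) auto
  have "M (Suc k) \<le> M k" for k
    unfolding M_def[of "Suc k"] using p0(1)
  proof (intro cSup_least)
    fix v assume "v \<in> (\<lambda>p. G p - 2 ^ Suc k * D p) ` S"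
    then obtain p where "p \<in> S" "v = G p - 2 ^ Suc k * D p" by auto
    moreover have "(2::real) ^ k * D p \<le> 2 ^ Suc k * D p" using D_nonneg[OF \<open>p \<in> S\<close>] by simp
    ultimately show "v \<le> M k" using M_upper[of p k] by linarith
  qed auto
  moreover have "G p0 \<le> M k" for k using M_upper[OF p0(1), of k] p0 by simp
  ultimately obtain k where k: "M k - M (Suc k) \<le> \<kappa>/2"
    using decseq_small_step[of M "G p0" "\<kappa>/2"] \<kappa> by auto
  have "2 ^ Suc k * D p \<le> 2 * \<kappa>"
    if "p \<in> S" "Sup ((\<lambda>p. G p - 2 ^ Suc k * D p) ` S) - \<kappa>/2 < G p - 2 ^ Suc k * D p" for p
    using that M_upper[of p k] k unfolding M_def by simp
  then show ?thesis by (intro exI[of _ "2 ^ Suc k"]) auto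
qed

lemma sq_dist_along_integral_curve:
  fixes F :: "'a::euclidean_space \<Rightarrow> 'a"
  assumes lip: "L-lipschitz_on UNIV F" and z: "integral_curve F y a (a + h) z"
    and h: "0 \<le> h" "L * h \<le> 1/2" and FK: "norm (F y) \<le> K" and xy: "norm (x - y) \<le> 1"
  shows "(x - z (a + h)) \<bullet> (x - z (a + h)) + (t - (s - h))^2
    \<le> (x - y) \<bullet> (x - y) + (t - s)^2 - 2 * h * ((x - y) \<bullet> F y - (t - s))
      + h^2 * (4 * L * K + 4 * K^2 + 1)"
proof -
  have L0: "L \<ge> 0" using lip by (simp add: lipschitz_on_def)
  define b where "b = z (a + h) - y"
  define e where "e = b - h *\<^sub>R F y"
  have short: "L * (a + h - a) \<le> 1/2" using h by simp
  have "norm b \<le> 2 * norm (F y) * h"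
    using integral_curve_norm_le[OF lip z short, of "a + h"] h by (simp add: b_def)
  also have "\<dots> \<le> 2 * K * h" using FK h by (simp add: mult_right_mono)
  finally have bb: "b \<bullet> b \<le> (2 * K * h)^2"
    by (metis power2_norm_eq_inner power_mono norm_ge_zero)
  have "norm e \<le> 2 * L * norm (F y) * h^2"
    using integral_curve_taylor[OF lip z short, of "a + h"] h by (simp add: e_def b_def)
  also have "\<dots> \<le> 2 * L * K * h^2" using FK L0 by (simp add: mult_right_mono mult_left_mono)
  finally have ne: "norm e \<le> 2 * L * K * h^2" .
  have "\<bar>(x - y) \<bullet> e\<bar> \<le> norm (x - y) * norm e" by (rule Cauchy_Schwarz_ineq2)
  also have "\<dots> \<le> 1 * (2 * L * K * h^2)" using xy ne by (intro mult_mono) auto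
  finally have "\<bar>(x - y) \<bullet> e\<bar> \<le> 2 * L * K * h^2" by simp
  moreover have "(x - z (a + h)) \<bullet> (x - z (a + h)) = (x - y) \<bullet> (x - y) - 2 * ((x - y) \<bullet> b) + b \<bullet> b"
    by (simp add: b_def algebra_simps inner_diff_left inner_diff_right inner_commute)
  moreover have "(x - y) \<bullet> b = h * ((x - y) \<bullet> F y) + (x - y) \<bullet> e"
    by (simp add: e_def inner_diff_right)
  moreover have "(t - (s - h))^2 = (t - s)^2 + 2 * h * (t - s) + h^2"
    by (simp add: power2_eq_square algebra_simps)
  ultimately show ?thesis using bb by (simp add: power2_eq_square algebra_simps)
qed

lemma C1_test_add:
  assumes "C1_test \<phi> \<phi>x \<phi>t" and "C1_test \<psi> \<psi>x \<psi>t"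
  shows "C1_test (\<lambda>y s. \<phi> y s + \<psi> y s) (\<lambda>y s. \<phi>x y s + \<psi>x y s) (\<lambda>y s. \<phi>t y s + \<psi>t y s)"
  unfolding C1_test_def
proof (intro conjI allI impI)
  fix x :: 'a and t :: real assume "0 < t"
  then have "((\<lambda>z. \<phi> (fst z) (snd z) + \<psi> (fst z) (snd z)) has_derivative
      (\<lambda>h. (\<phi>x x t \<bullet> fst h + \<phi>t x t * snd h) + (\<psi>x x t \<bullet> fst h + \<psi>t x t * snd h))) (at (x, t))"
    using assms unfolding C1_test_def by (intro has_derivative_add) auto
  then show "((\<lambda>z. \<phi> (fst z) (snd z) + \<psi> (fst z) (snd z)) has_derivative
      (\<lambda>h. (\<phi>x x t + \<psi>x x t) \<bullet> fst h + (\<phi>t x t + \<psi>t x t) * snd h)) (at (x, t))"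
    by (simp add: inner_add_left algebra_simps)
qed (use assms in \<open>auto simp: C1_test_def intro!: continuous_intros\<close>)

lemma C1_test_quadratic:
  "C1_test (\<lambda>y s. c * ((y - a) \<bullet> (y - a) + (s - b)^2)) (\<lambda>y s. (2 * c) *\<^sub>R (y - a)) (\<lambda>y s. 2 * c * (s - b))"
  unfolding C1_test_def
proof (intro conjI allI impI)
  fix x :: 'a and t :: real
  show "((\<lambda>z. c * ((fst z - a) \<bullet> (fst z - a) + (snd z - b)^2)) has_derivative
      (\<lambda>h. (2 * c) *\<^sub>R (x - a) \<bullet> fst h + 2 * c * (t - b) * snd h)) (at (x, t))"
    by (rule derivative_eq_intros refl | simp)+
      (auto simp: algebra_simps inner_commute power2_eq_square inner_diff_right inner_diff_left)
qed (auto intro!: continuous_intros)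

lemma C1_test_barrier:
  "C1_test (\<lambda>y s. d * exp (m * ((y - a) \<bullet> (y - a) + K * (s - b))) + \<sigma> * s)
     (\<lambda>y s. (2 * m * d * exp (m * ((y - a) \<bullet> (y - a) + K * (s - b)))) *\<^sub>R (y - a))
     (\<lambda>y s. m * K * d * exp (m * ((y - a) \<bullet> (y - a) + K * (s - b))) + \<sigma>)"
  unfolding C1_test_def
proof (intro conjI allI impI)
  fix x :: 'a and t :: real
  show "((\<lambda>z. d * exp (m * ((fst z - a) \<bullet> (fst z - a) + K * (snd z - b))) + \<sigma> * snd z) has_derivative
      (\<lambda>h. (2 * m * d * exp (m * ((x - a) \<bullet> (x - a) + K * (t - b)))) *\<^sub>R (x - a) \<bullet> fst h
         + (m * K * d * exp (m * ((x - a) \<bullet> (x - a) + K * (t - b))) + \<sigma>) * snd h)) (at (x, t))"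
    by (rule derivative_eq_intros refl | simp)+
      (auto simp: algebra_simps inner_commute inner_diff_right inner_diff_left)
qed (auto intro!: continuous_intros)

lemma local_max_of_quadratic_perturbation:
  fixes W :: "'a::euclidean_space \<Rightarrow> real \<Rightarrow> real"
  assumes cont: "continuous_on (cball (x, t) r) (\<lambda>z. W (fst z) (snd z))" and r: "0 < r"
  shows "\<exists>c y s. dist (y, s) (x, t) < r \<and>
    local_max_at (\<lambda>y s. W y s - c * ((y - x) \<bullet> (y - x) + (s - t)^2)) y s"
proof -
  define S where "S = cball (x, t) r"
  have S: "compact S" "S \<noteq> {}" "(x, t) \<in> S" using r by (auto simp: S_def)
  obtain pm where pm: "\<forall>p\<in>S. W (fst p) (snd p) \<le> W (fst pm) (snd pm)"
    using continuous_attains_sup[OF S(1,2) cont[folded S_def]] by blast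
  define c where "c = (W (fst pm) (snd pm) - W x t + 1) / r^2"
  define \<psi> where "\<psi> y s = W y s - c * ((y - x) \<bullet> (y - x) + (s - t)^2)" for y s
  have \<psi>_dist: "\<psi> y s = W y s - c * (dist (y, s) (x, t))^2" for y s
  proof -
    have "(dist (y, s) (x, t))^2 = (dist y x)^2 + (dist s t)^2" by (simp add: dist_Pair_Pair)
    then show ?thesis by (simp add: \<psi>_def dist_norm power2_norm_eq_inner dist_real_def)
  qed
  have "continuous_on S (\<lambda>p. \<psi> (fst p) (snd p))"
    unfolding \<psi>_def using cont[folded S_def] by (intro continuous_intros)
  then obtain y1 s1 where p1: "(y1, s1) \<in> S" and p1max: "\<forall>p\<in>S. \<psi> (fst p) (snd p) \<le> \<psi> y1 s1"
    using continuous_attains_sup[OF S(1,2)] by fastforce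
  have inner: "dist (y1, s1) (x, t) < r"
  proof (rule ccontr)
    assume "\<not> dist (y1, s1) (x, t) < r"
    then have "c * (dist (y1, s1) (x, t))^2 = W (fst pm) (snd pm) - W x t + 1"
      using p1 r by (simp add: S_def dist_commute c_def)
    moreover have "W x t \<le> \<psi> y1 s1" using p1max S(3) by (force simp: \<psi>_def)
    moreover have "W y1 s1 \<le> W (fst pm) (snd pm)" using pm p1 by force
    ultimately show False by (simp add: \<psi>_dist)
  qed
  have "local_max_at \<psi> y1 s1"
    unfolding local_max_at_def
  proof (intro exI[of _ "r - dist (y1, s1) (x, t)"] conjI allI impI)
    fix y s assume "0 < s \<and> dist (y, s) (y1, s1) < r - dist (y1, s1) (x, t)"
    then have "(y, s) \<in> S"
      using dist_triangle[of "(y, s)" "(x, t)" "(y1, s1)"] by (simp add: S_def dist_commute)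
    then show "\<psi> y s \<le> \<psi> y1 s1" using p1max by fastforce
  qed (use inner in simp)
  then show ?thesis using inner unfolding \<psi>_def by blast
qed

section \<open>Comparison with a superoptimal function\<close>

text \<open>The comparison argument only uses that W is a continuous viscosity subsolution whose
  Hamiltonian is dominated by the maximum of p \<bullet> F i x over finitely many Lipschitz fields, and
  that V is superoptimal along each of these fields. With reach = False this is the avoid problem,
  with reach = True the reach-avoid problem with target function l.\<close>

locale comparison =
  fixes W V :: "'a::euclidean_space \<Rightarrow> real \<Rightarrow> real" and g l :: "'a \<Rightarrow> real"
    and F :: "'i \<Rightarrow> 'a \<Rightarrow> 'a" and I :: "'i set" and reach :: bool and L Cg Cl :: real
  assumes finite_I: "finite I" and I_nonempty: "I \<noteq> {}"
    and F_lipschitz: "\<And>i. i \<in> I \<Longrightarrow> L-lipschitz_on UNIV (F i)"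
    and g_lipschitz: "Cg-lipschitz_on UNIV g" and l_lipschitz: "Cl-lipschitz_on UNIV l"
    and W_cont: "continuous_on (UNIV \<times> {0..}) (\<lambda>z. W (fst z) (snd z))"
    and W_sub: "\<And>\<phi> \<phi>x \<phi>t x t. C1_test \<phi> \<phi>x \<phi>t \<Longrightarrow> 0 < t \<Longrightarrow>
      local_max_at (\<lambda>y s. W y s - \<phi> y s) x t \<Longrightarrow>
      W x t \<le> g x \<and> (reach \<and> W x t \<le> l x \<or> (\<exists>i\<in>I. \<phi>t x t \<le> \<phi>x x t \<bullet> F i x))"
    and W_initial: "\<And>x. W x 0 \<le> g x"
    and W_le_V_initial: "\<And>x. W x 0 \<le> V x 0"
    and V_superoptimal: "\<And>i y s h. i \<in> I \<Longrightarrow> 0 < h \<Longrightarrow> h \<le> s \<Longrightarrow>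
      \<exists>z. integral_curve (F i) y (-s) (-s + h) z \<and>
        min (Inf ((\<lambda>\<tau>. g (z \<tau>)) ` {-s..-s + h})) (V (z (-s + h)) (s - h)) \<le> V y s"
    and V_reach: "\<And>y s. reach \<Longrightarrow> 0 \<le> s \<Longrightarrow> min (l y) (g y) \<le> V y s"
begin

lemma L_nonneg: "0 \<le> L"
  using F_lipschitz I_nonempty by (auto simp: lipschitz_on_def)

lemma Cg_nonneg: "0 \<le> Cg"
  using g_lipschitz by (simp add: lipschitz_on_def)

lemma Cl_nonneg: "0 \<le> Cl"
  using l_lipschitz by (simp add: lipschitz_on_def)

lemma g_diff_le: "g x - g y \<le> Cg * norm (x - y)"
  using g_lipschitz by (auto simp: lipschitz_on_def dist_norm dest!: bspec[of _ _ x] abs_le_D1)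

lemma l_diff_le: "l x - l y \<le> Cl * norm (x - y)"
  using l_lipschitz by (auto simp: lipschitz_on_def dist_norm dest!: bspec[of _ _ x] abs_le_D1)

lemma F_diff_le: "i \<in> I \<Longrightarrow> norm (F i x - F i y) \<le> L * norm (x - y)"
  using F_lipschitz by (auto simp: lipschitz_on_def dist_norm)

definition F_bound :: "'a \<Rightarrow> real \<Rightarrow> real" where
  "F_bound x r = (\<Sum>i\<in>I. norm (F i x)) + L * r"

lemma norm_F_le:
  assumes "i \<in> I" and "norm (y - x) \<le> r"
  shows "norm (F i y) \<le> F_bound x r"
proof -
  have "norm (F i y) \<le> norm (F i x) + norm (F i y - F i x)" by (rule norm_triangle_sub)
  also have "norm (F i y - F i x) \<le> L * r"
    using F_diff_le[OF assms(1)] assms(2) L_nonneg by (meson mult_left_mono order_trans)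
  also have "norm (F i x) \<le> (\<Sum>i\<in>I. norm (F i x))"
    using assms(1) finite_I by (intro member_le_sum) auto
  finally show ?thesis by (simp add: F_bound_def)
qed

lemma F_bound_nonneg: "0 \<le> r \<Longrightarrow> 0 \<le> F_bound x r"
  using L_nonneg by (simp add: F_bound_def sum_nonneg)

text \<open>A steep paraboloid touching W from above near (x, t) moves the obstacle inequality
  W \<le> g from the touching point to (x, t).\<close>

lemma W_le_g:
  assumes "0 \<le> t"
  shows "W x t \<le> g x"
proof (rule ccontr)
  assume gap: "\<not> W x t \<le> g x"
  then have t: "0 < t" using assms W_initial by (cases "t = 0") auto
  have "continuous_on (UNIV \<times> {0..}) (\<lambda>z. g (fst z))"
    using continuous_on_compose2[OF lipschitz_on_continuous_on[OF g_lipschitz]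
        continuous_on_fst[OF continuous_on_id]] by auto
  then have "continuous_on (UNIV \<times> {0..}) (\<lambda>z. W (fst z) (snd z) - g (fst z))"
    using W_cont by (intro continuous_intros)
  then obtain r0 where r0: "0 < r0" and near: "\<forall>p\<in>UNIV \<times> {0..}. dist p (x, t) < r0 \<longrightarrow>
      dist (W (fst p) (snd p) - g (fst p)) (W x t - g x) < W x t - g x"
    using gap t unfolding continuous_on_iff by (metis UNIV_I atLeast_iff fst_conv less_eq_real_def
      mem_Times_iff snd_conv diff_gt_0_iff_gt not_le)
  define r where "r = min (r0 / 2) (t / 2)"
  have r: "0 < r" "r < r0" "r < t" using r0 t by (auto simp: r_def)
  have pos: "0 < snd p" if "dist p (x, t) \<le> r" for p
    using dist_snd_le[of p "(x, t)"] that r by (auto simp: dist_real_def)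
  have "continuous_on (cball (x, t) r) (\<lambda>z. W (fst z) (snd z))"
    by (rule continuous_on_subset[OF W_cont]) (auto simp: dist_commute less_imp_le dest!: pos)
  then obtain c y s where ys: "dist (y, s) (x, t) < r"
    and max: "local_max_at (\<lambda>y s. W y s - c * ((y - x) \<bullet> (y - x) + (s - t)^2)) y s"
    using local_max_of_quadratic_perturbation r by blast
  have "0 < s" using pos[of "(y, s)"] ys by simp
  then have "W y s \<le> g y" using W_sub[OF C1_test_quadratic \<open>0 < s\<close> max] by blast
  moreover have "dist (W y s - g y) (W x t - g x) < W x t - g x"
    using near \<open>0 < s\<close> ys r by auto
  ultimately show False by (simp add: dist_real_def)
qed

lemma W_earlier_le_V:
  assumes t0: "0 \<le> t0" and IH: "\<And>x. W x t0 \<le> V x t0" and i: "i \<in> I"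
    and s: "t0 \<le> s" "L * (s - t0) \<le> 1/2"
  shows "\<exists>w. norm (w - y) \<le> 2 * norm (F i y) * (s - t0) \<and> W w t0 \<le> V y s"
proof (cases "s = t0")
  case True
  then show ?thesis using IH by (intro exI[of _ y]) auto
next
  case False
  define h where "h = s - t0"
  have h: "0 < h" "h \<le> s" "-s + h = -t0" using False s t0 by (auto simp: h_def)
  obtain z where z: "integral_curve (F i) y (-s) (-s + h) z"
    and dp: "min (Inf ((\<lambda>\<tau>. g (z \<tau>)) ` {-s..-s + h})) (V (z (-s + h)) (s - h)) \<le> V y s"
    using V_superoptimal[OF i h(1,2)] by blast
  have near: "norm (z r - y) \<le> 2 * norm (F i y) * (s - t0)" if "r \<in> {-s..-s + h}" for r
  proof -
    have "norm (z r - y) \<le> 2 * norm (F i y) * (r - -s)"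
      using integral_curve_norm_le[OF F_lipschitz[OF i] z _ that] s by (simp add: h_def)
    also have "\<dots> \<le> 2 * norm (F i y) * (s - t0)" using that by (intro mult_left_mono) (auto simp: h_def)
    finally show ?thesis .
  qed
  have "continuous_on {-s..-s + h} (\<lambda>\<tau>. g (z \<tau>))"
    using continuous_on_compose2[OF lipschitz_on_continuous_on[OF g_lipschitz]
        integral_curve_continuous_on[OF z]] by auto
  moreover have "{-s..-s + h} \<noteq> {}" using h by simp
  ultimately obtain r where r: "r \<in> {-s..-s + h}" and rmin: "\<forall>\<tau>\<in>{-s..-s + h}. g (z r) \<le> g (z \<tau>)"
    using continuous_attains_inf[OF compact_Icc] by blast
  have "g (z r) \<le> Inf ((\<lambda>\<tau>. g (z \<tau>)) ` {-s..-s + h})"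
    using rmin h by (intro cInf_greatest) auto
  show ?thesis
  proof (cases "V (z (-s + h)) (s - h) \<le> Inf ((\<lambda>\<tau>. g (z \<tau>)) ` {-s..-s + h})")
    case True
    then have "W (z (-s + h)) t0 \<le> V y s" using dp IH[of "z (-s + h)"] h by (simp add: h_def)
    then show ?thesis using near[of "-s + h"] h by (intro exI[of _ "z (-s + h)"]) auto
  next
    case False
    then have "W (z r) t0 \<le> V y s"
      using dp W_le_g[OF t0, of "z r"] \<open>g (z r) \<le> Inf _\<close> by linarith
    then show ?thesis using near[OF r] by blast
  qed
qed

lemma V_bounded_below:
  assumes t0: "0 \<le> t0" and IH: "\<And>x. W x t0 \<le> V x t0"
    and T: "t0 \<le> T" "L * (T - t0) \<le> 1/2" and r: "0 \<le> r"
  shows "\<exists>m. \<forall>y s. norm (y - x) \<le> r \<longrightarrow> t0 \<le> s \<longrightarrow> s \<le> T \<longrightarrow> m \<le> V y s"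
proof -
  obtain i where i: "i \<in> I" using I_nonempty by blast
  define R where "R = r + 2 * F_bound x r * (T - t0)"
  have "continuous_on (cball x R) (\<lambda>w. (\<lambda>z. W (fst z) (snd z)) (w, t0))"
    by (rule continuous_on_compose2[OF W_cont]) (use t0 in \<open>auto intro!: continuous_intros\<close>)
  then have "continuous_on (cball x R) (\<lambda>w. W w t0)" by simp
  moreover have "0 \<le> F_bound x r * (T - t0)" using F_bound_nonneg[OF r] T by simp
  then have "cball x R \<noteq> {}" using r by (simp add: R_def)
  ultimately obtain wm where wm: "\<forall>w\<in>cball x R. W wm t0 \<le> W w t0"
    using continuous_attains_inf[OF compact_cball] by metis
  have "W wm t0 \<le> V y s" if y: "norm (y - x) \<le> r" and s: "t0 \<le> s" "s \<le> T" for y s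
  proof -
    have "L * (s - t0) \<le> L * (T - t0)" using s L_nonneg by (intro mult_left_mono) auto
    then obtain w where w: "norm (w - y) \<le> 2 * norm (F i y) * (s - t0)" "W w t0 \<le> V y s"
      using W_earlier_le_V[OF t0 IH i s(1)] T by fastforce
    have "2 * norm (F i y) * (s - t0) \<le> 2 * F_bound x r * (T - t0)"
      using norm_F_le[OF i y] F_bound_nonneg[OF r] s by (intro mult_mono) auto
    then have "norm (w - x) \<le> R"
      using w(1) y norm_triangle_ineq[of "w - y" "y - x"] by (simp add: R_def)
    then have "w \<in> cball x R" by (simp add: dist_norm norm_minus_commute)
    then show ?thesis using wm w(2) by force
  qed
  then show ?thesis by blast
qed

text \<open>V is not known to be continuous: the estimate goes through W_earlier_le_V and the
  uniform continuity of W.\<close>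

lemma W_V_gap_small:
  assumes t0: "0 \<le> t0" and IH: "\<And>x. W x t0 \<le> V x t0" and \<epsilon>: "0 < \<epsilon>" and r: "0 \<le> r"
  shows "\<exists>\<gamma>>0. \<forall>x t y s. norm (x - xb) \<le> r \<longrightarrow> t \<in> {t0..t0 + \<gamma>} \<longrightarrow> s \<in> {t0..t0 + \<gamma>} \<longrightarrow>
    norm (x - y) \<le> \<gamma> \<longrightarrow> W x t - V y s < \<epsilon>"
proof -
  obtain i where i: "i \<in> I" using I_nonempty by blast
  define K where "K = F_bound xb (r + 1)"
  have K: "0 \<le> K" using F_bound_nonneg r by (simp add: K_def)
  define Z where "Z = cball xb (r + 2) \<times> {t0..t0 + 1}"
  have "continuous_on Z (\<lambda>p. W (fst p) (snd p))"
    by (rule continuous_on_subset[OF W_cont]) (use t0 in \<open>auto simp: Z_def\<close>)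
  then have "uniformly_continuous_on Z (\<lambda>p. W (fst p) (snd p))"
    by (rule compact_uniformly_continuous) (auto simp: Z_def intro: compact_Times)
  then obtain \<omega> where \<omega>: "0 < \<omega>"
    and unif: "\<And>p q. p \<in> Z \<Longrightarrow> q \<in> Z \<Longrightarrow> dist q p < \<omega> \<Longrightarrow> dist (W (fst q) (snd q)) (W (fst p) (snd p)) < \<epsilon>"
    using \<epsilon> unfolding uniformly_continuous_on_def by metis
  have lim: "((\<lambda>\<gamma>. c * \<gamma>) \<longlongrightarrow> 0) (at_right 0)" for c :: real
    by (auto intro!: tendsto_eq_intros)
  have "\<forall>\<^sub>F \<gamma> in at_right 0. 0 < \<gamma> \<and> L * \<gamma> < 1/2 \<and> (2 * K + 2) * \<gamma> < min \<omega> 1"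
    using \<omega> by (intro eventually_conj eventually_at_right_less order_tendstoD(2)[OF lim]) auto
  then obtain \<gamma> where "0 < \<gamma>" "L * \<gamma> < 1/2" "(2 * K + 2) * \<gamma> < min \<omega> 1"
    using eventually_happens'[OF trivial_limit_at_right_real] by blast
  moreover from this have "0 \<le> K * \<gamma>" using K by simp
  ultimately have \<gamma>: "0 < \<gamma>" "L * \<gamma> \<le> 1/2" "\<gamma> \<le> 1" "(2 * K + 1) * \<gamma> \<le> 2" "(2 * K + 2) * \<gamma> < \<omega>"
    by (auto simp: algebra_simps)
  have "W x t - V y s < \<epsilon>"
    if x: "norm (x - xb) \<le> r" and t: "t \<in> {t0..t0 + \<gamma>}" and s: "s \<in> {t0..t0 + \<gamma>}"
      and xy: "norm (x - y) \<le> \<gamma>" for x t y s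
  proof -
    have "L * (s - t0) \<le> L * \<gamma>" using s L_nonneg by (intro mult_left_mono) auto
    then obtain w where w: "norm (w - y) \<le> 2 * norm (F i y) * (s - t0)" "W w t0 \<le> V y s"
      using W_earlier_le_V[OF t0 IH i] s \<gamma> by fastforce
    have "norm (y - xb) \<le> r + 1"
      using norm_triangle_ineq[of "y - x" "x - xb"] x xy \<gamma> by (simp add: norm_minus_commute)
    then have "2 * norm (F i y) * (s - t0) \<le> 2 * K * \<gamma>"
      using norm_F_le[OF i] s K by (intro mult_mono) (auto simp: K_def)
    then have wx: "norm (w - x) \<le> (2 * K + 1) * \<gamma>"
      using w(1) xy norm_triangle_ineq[of "w - y" "y - x"] by (simp add: norm_minus_commute algebra_simps)
    have "norm (w - xb) \<le> r + 2"
      using norm_triangle_ineq[of "w - x" "x - xb"] wx x \<gamma> by simp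
    then have wZ: "(w, t0) \<in> Z" and xZ: "(x, t) \<in> Z"
      using x t \<gamma> by (auto simp: Z_def dist_norm norm_minus_commute)
    have "dist (w, t0) (x, t) \<le> dist (w, t0) (x, t0) + dist (x, t0) (x, t)" by (rule dist_triangle)
    also have "\<dots> \<le> (2 * K + 1) * \<gamma> + \<gamma>"
      using wx t by (simp add: dist_Pair_Pair dist_norm dist_real_def)
    also have "\<dots> < \<omega>" using \<gamma> by (simp add: algebra_simps)
    finally have "W x t - W w t0 < \<epsilon>" using unif[OF wZ xZ] by (simp add: dist_real_def dist_commute)
    then show ?thesis using w(2) by simp
  qed
  then show ?thesis using \<gamma>(1) by blast
qed

definition window_length :: real where
  "window_length = 1 / (4 * (L + 1))"

lemma window_length_bounds: "0 < window_length" "L * window_length \<le> 1/4" "window_length \<le> 1/4"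
  using L_nonneg by (auto simp: window_length_def field_simps)

end

text \<open>One time window of the comparison: W \<le> V at time t0, and Tp lies in the next window.
  The doubled function \<Phi> lives on X \<times> Y; the barrier \<zeta> is large on the side and the top of X, so
  that maxima in (x, t) are interior, and the term \<sigma> * t makes the subsolution inequality strict.\<close>

locale comparison_window = comparison +
  fixes t0 Tp :: real and xb :: 'a and \<delta> :: real
  assumes t0_nonneg: "0 \<le> t0" and W_le_V_t0: "\<And>x. W x t0 \<le> V x t0"
    and Tp: "t0 < Tp" "Tp \<le> t0 + window_length" and \<delta>_pos: "0 < \<delta>"
begin

definition "T2 = Tp + window_length"
definition "R = 4 * F_bound xb 0 + 4"
definition "K = 1 / window_length + 2 * R * F_bound xb R"
definition "C = 2 * F_bound xb (R + 1)"
definition "X = cball xb R \<times> {t0..T2}"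
definition "Y = cball xb (R + 1) \<times> {t0..T2}"
definition "B = Sup {W x t - V y s | x t y s. (x, t) \<in> X \<and> (y, s) \<in> Y}"
definition "\<sigma> = \<delta> / (2 * (T2 + 1))"
definition "\<mu> = \<bar>B\<bar> / \<delta> + 1"
definition "\<zeta> x t = \<delta> * exp (\<mu> * ((x - xb) \<bullet> (x - xb) + K * (t - Tp)))"
definition "\<Phi> lam x t y s = W x t - V y s - lam * ((x - y) \<bullet> (x - y) + (t - s)^2) - \<zeta> x t - \<sigma> * t"

lemma T2_bounds: "t0 < T2" "Tp < T2" "L * (T2 - t0) \<le> 1/2"
proof -
  show "t0 < T2" "Tp < T2" using Tp window_length_bounds by (auto simp: T2_def)
  have "L * (T2 - t0) \<le> L * (2 * window_length)"
    using Tp L_nonneg by (intro mult_left_mono) (auto simp: T2_def)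
  then show "L * (T2 - t0) \<le> 1/2" using window_length_bounds by simp
qed

lemma R_ge_4: "4 \<le> R"
  using F_bound_nonneg[of 0 xb] by (simp add: R_def)

lemma K_nonneg: "0 \<le> K"
  using window_length_bounds F_bound_nonneg[of R xb] R_ge_4 by (simp add: K_def)

lemma C_nonneg: "0 \<le> C"
  using F_bound_nonneg[of "R + 1" xb] R_ge_4 by (simp add: C_def)

lemma K_window: "1 \<le> K * window_length" "1 \<le> R^2 - K * window_length"
proof -
  define M where "M = F_bound xb 0"
  have M: "0 \<le> M" using F_bound_nonneg by (simp add: M_def)
  have F_R: "F_bound xb R = M + L * R" by (simp add: M_def F_bound_def)
  have KW: "K * window_length = 1 + 2 * R * M * window_length + 2 * R^2 * (L * window_length)"
    using window_length_bounds by (simp add: K_def F_R field_simps power2_eq_square)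
  then show "1 \<le> K * window_length" using R_ge_4 M window_length_bounds L_nonneg by simp
  have "2 * R * M * window_length \<le> 2 * R * M * (1/4)"
    using R_ge_4 M window_length_bounds by (intro mult_left_mono) auto
  moreover have "2 * R^2 * (L * window_length) \<le> 2 * R^2 * (1/4)"
    using window_length_bounds by (intro mult_left_mono) auto
  moreover have "R * M / 2 + R^2 / 2 + 2 \<le> R^2"
  proof -
    have "R^2 - R * M / 2 - R^2 / 2 = (2 * M + 2) * (3 * M + 4)"
      by (simp add: R_def M_def[symmetric] power2_eq_square field_simps)
    also have "\<dots> \<ge> 2 * 4" using M by (intro mult_mono) auto
    finally show ?thesis by simp
  qed
  ultimately show "1 \<le> R^2 - K * window_length" using KW by linarith
qed

lemma X_compact: "compact X" and X_nonempty: "(xb, Tp) \<in> X"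
  and Y_nonempty: "(xb, Tp) \<in> Y"
  using Tp T2_bounds R_ge_4 by (auto simp: X_def Y_def intro!: compact_Times)

lemma X_subset: "X \<subseteq> UNIV \<times> {0..}"
  using t0_nonneg by (auto simp: X_def)

lemma gap_le_B:
  assumes "(x, t) \<in> X" and "(y, s) \<in> Y"
  shows "W x t - V y s \<le> B"
proof -
  obtain pm where pm: "\<forall>p\<in>X. W (fst p) (snd p) \<le> W (fst pm) (snd pm)"
    using continuous_attains_sup[OF X_compact _ continuous_on_subset[OF W_cont X_subset]] X_nonempty
    by blast
  obtain m where m: "\<And>y s. norm (y - xb) \<le> R + 1 \<Longrightarrow> t0 \<le> s \<Longrightarrow> s \<le> T2 \<Longrightarrow> m \<le> V y s"
    using V_bounded_below[OF t0_nonneg W_le_V_t0, of T2 "R + 1" xb] T2_bounds R_ge_4 by fastforce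
  have "bdd_above {W x t - V y s | x t y s. (x, t) \<in> X \<and> (y, s) \<in> Y}"
  proof (rule bdd_aboveI)
    fix v assume "v \<in> {W x t - V y s | x t y s. (x, t) \<in> X \<and> (y, s) \<in> Y}"
    then obtain x t y s where "v = W x t - V y s" "(x, t) \<in> X" "(y, s) \<in> Y" by blast
    then show "v \<le> W (fst pm) (snd pm) - m"
      using pm m[of y s] by (force simp: Y_def dist_norm norm_minus_commute)
  qed
  then show ?thesis unfolding B_def using assms by (intro cSup_upper) auto
qed

lemma \<sigma>_bounds: "0 < \<sigma>" "\<sigma> * T2 \<le> \<delta> / 2"
  using \<delta>_pos T2_bounds t0_nonneg by (auto simp: \<sigma>_def field_simps)

lemma \<zeta>_pos: "0 < \<zeta> x t"
  using \<delta>_pos by (simp add: \<zeta>_def)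

lemma \<zeta>_center: "\<zeta> xb Tp = \<delta>"
  by (simp add: \<zeta>_def)

lemma \<zeta>_large_off_interior:
  assumes "(x, t) \<in> X" and "\<not> (norm (x - xb) < R \<and> t < T2)"
  shows "\<bar>B\<bar> + 2 * \<delta> \<le> \<zeta> x t"
proof -
  have t: "t0 \<le> t" "t \<le> T2" using assms(1) by (auto simp: X_def)
  have "1 \<le> (x - xb) \<bullet> (x - xb) + K * (t - Tp)"
  proof (cases "norm (x - xb) < R")
    case True
    then have "T2 \<le> t" using assms t by auto
    then have "K * window_length \<le> K * (t - Tp)"
      using K_nonneg by (intro mult_left_mono) (auto simp: T2_def)
    then show ?thesis using K_window(1) inner_ge_zero[of "x - xb"] by linarith
  next
    case False
    then have "R^2 \<le> (x - xb) \<bullet> (x - xb)"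
      using R_ge_4 by (metis power2_norm_eq_inner power_mono not_less order_trans zero_le_numeral)
    moreover have "K * (- window_length) \<le> K * (t - Tp)"
      using K_nonneg t Tp by (intro mult_left_mono) auto
    ultimately show ?thesis using K_window(2) by simp
  qed
  moreover have "0 \<le> \<mu>" using \<delta>_pos by (simp add: \<mu>_def add_nonneg_nonneg)
  ultimately have "\<mu> * 1 \<le> \<mu> * ((x - xb) \<bullet> (x - xb) + K * (t - Tp))"
    by (intro mult_left_mono)
  then have "exp \<mu> \<le> exp (\<mu> * ((x - xb) \<bullet> (x - xb) + K * (t - Tp)))" by simp
  then have "1 + \<mu> \<le> exp (\<mu> * ((x - xb) \<bullet> (x - xb) + K * (t - Tp)))"
    using exp_ge_add_one_self[of \<mu>] by linarith
  then have "\<delta> * (1 + \<mu>) \<le> \<zeta> x t" using \<delta>_pos by (simp add: \<zeta>_def)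
  moreover have "\<delta> * (1 + \<mu>) = \<bar>B\<bar> + 2 * \<delta>" using \<delta>_pos by (simp add: \<mu>_def field_simps)
  ultimately show ?thesis by simp
qed

lemma barrier_drift_le:
  assumes "i \<in> I" and "norm (x - xb) \<le> R"
  shows "2 * ((x - xb) \<bullet> F i x) \<le> K"
proof -
  have "(x - xb) \<bullet> F i x \<le> norm (x - xb) * norm (F i x)" by (rule norm_cauchy_schwarz)
  also have "\<dots> \<le> R * F_bound xb R" using assms norm_F_le R_ge_4 by (intro mult_mono) auto
  moreover have "0 \<le> 1 / window_length" using window_length_bounds by simp
  ultimately show ?thesis unfolding K_def by linarith
qed

lemma \<Phi>_le_gap:
  assumes "0 \<le> lam" and "(x, t) \<in> X"
  shows "\<Phi> lam x t y s \<le> W x t - V y s - \<zeta> x t"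
proof -
  have "0 \<le> lam * ((x - y) \<bullet> (x - y) + (t - s)^2)" using assms(1) by simp
  moreover have "0 \<le> \<sigma> * t" using assms(2) \<sigma>_bounds t0_nonneg by (simp add: X_def)
  ultimately show ?thesis by (simp add: \<Phi>_def)
qed

lemma \<Phi>_eq: "\<Phi> lam x t y s = \<Phi> 0 x t y s - lam * ((x - y) \<bullet> (x - y) + (t - s)^2)"
  by (simp add: \<Phi>_def)

definition "\<gamma> = (SOME \<gamma>. 0 < \<gamma> \<and> (\<forall>x t y s. norm (x - xb) \<le> R \<longrightarrow> t \<in> {t0..t0 + \<gamma>} \<longrightarrow>
  s \<in> {t0..t0 + \<gamma>} \<longrightarrow> norm (x - y) \<le> \<gamma> \<longrightarrow> W x t - V y s < \<delta>))"
definition "\<rho> = min (\<gamma> / 2) (min (1/4) (\<delta> / (4 * (Cg + Cl + 1))))"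
definition "\<kappa> = min (\<rho>^2) (\<sigma> / (16 * (L + 1)))"
definition "Q = 2 * L * C + C^2 + 1"
definition "step lam = min (\<gamma> / 2) (min window_length (min (1 / (2 * C + 1))
  (min (\<delta> / (Cg * C + 1)) (\<sigma> / (4 * lam * Q)))))"
definition "slack lam = min (\<delta> / 2) (min (\<sigma> * step lam / 4) (\<kappa> / 2))"

lemma \<gamma>_pos: "0 < \<gamma>"
  and W_V_gap_small_\<gamma>: "norm (x - xb) \<le> R \<Longrightarrow> t \<in> {t0..t0 + \<gamma>} \<Longrightarrow> s \<in> {t0..t0 + \<gamma>} \<Longrightarrow>
    norm (x - y) \<le> \<gamma> \<Longrightarrow> W x t - V y s < \<delta>"
proof -
  have "\<exists>\<gamma>>0. \<forall>x t y s. norm (x - xb) \<le> R \<longrightarrow> t \<in> {t0..t0 + \<gamma>} \<longrightarrow> s \<in> {t0..t0 + \<gamma>} \<longrightarrow>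
    norm (x - y) \<le> \<gamma> \<longrightarrow> W x t - V y s < \<delta>"
    using W_V_gap_small[OF t0_nonneg W_le_V_t0 \<delta>_pos] R_ge_4 by simp
  then have "0 < \<gamma> \<and> (\<forall>x t y s. norm (x - xb) \<le> R \<longrightarrow> t \<in> {t0..t0 + \<gamma>} \<longrightarrow>
      s \<in> {t0..t0 + \<gamma>} \<longrightarrow> norm (x - y) \<le> \<gamma> \<longrightarrow> W x t - V y s < \<delta>)"
    unfolding \<gamma>_def by (rule someI_ex[where P="\<lambda>\<gamma>. 0 < \<gamma> \<and> _ \<gamma>"])
  then show "0 < \<gamma>" "norm (x - xb) \<le> R \<Longrightarrow> t \<in> {t0..t0 + \<gamma>} \<Longrightarrow> s \<in> {t0..t0 + \<gamma>} \<Longrightarrow>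
      norm (x - y) \<le> \<gamma> \<Longrightarrow> W x t - V y s < \<delta>"
    by blast+
qed

lemma \<rho>_bounds: "0 < \<rho>" "\<rho> \<le> \<gamma> / 2" "\<rho> \<le> 1/4" "Cg * \<rho> \<le> \<delta> / 4" "Cl * \<rho> \<le> \<delta> / 4"
proof -
  show "0 < \<rho>" using \<gamma>_pos \<delta>_pos Cg_nonneg Cl_nonneg by (simp add: \<rho>_def)
  show "\<rho> \<le> \<gamma> / 2" "\<rho> \<le> 1/4"
    unfolding \<rho>_def by (rule min.cobounded1, rule min.coboundedI2, rule min.cobounded1)
  have "\<rho> \<le> \<delta> / (4 * (Cg + Cl + 1))" by (simp add: \<rho>_def)
  then have "(Cg + Cl + 1) * \<rho> \<le> \<delta> / 4"
    using Cg_nonneg Cl_nonneg by (simp add: field_simps)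
  moreover have "0 \<le> Cg * \<rho>" "0 \<le> Cl * \<rho>" using \<open>0 < \<rho>\<close> Cg_nonneg Cl_nonneg by simp_all
  moreover have "(Cg + Cl + 1) * \<rho> = Cg * \<rho> + Cl * \<rho> + \<rho>" by (simp add: algebra_simps)
  ultimately show "Cg * \<rho> \<le> \<delta> / 4" "Cl * \<rho> \<le> \<delta> / 4" using \<open>0 < \<rho>\<close> by linarith+
qed

lemma \<kappa>_bounds: "0 < \<kappa>" "\<kappa> \<le> \<rho>^2" "8 * L * \<kappa> \<le> \<sigma> / 2"
proof -
  show "0 < \<kappa>" "\<kappa> \<le> \<rho>^2" using \<rho>_bounds \<sigma>_bounds L_nonneg by (auto simp: \<kappa>_def)
  have "8 * L * \<kappa> \<le> 8 * L * (\<sigma> / (16 * (L + 1)))"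
    using L_nonneg by (intro mult_left_mono) (auto simp: \<kappa>_def)
  also have "\<dots> = (\<sigma> / 2) * (L / (L + 1))" using L_nonneg by (simp add: field_simps)
  also have "\<dots> \<le> (\<sigma> / 2) * 1" using L_nonneg \<sigma>_bounds by (intro mult_left_mono) auto
  finally show "8 * L * \<kappa> \<le> \<sigma> / 2" by simp
qed

lemma Q_ge_1: "1 \<le> Q"
  using L_nonneg C_nonneg by (simp add: Q_def)

lemma step_bounds:
  assumes "0 < lam"
  shows "0 < step lam" "step lam \<le> \<gamma> / 2" "L * step lam \<le> 1/2" "C * step lam \<le> 1/2"
    "Cg * C * step lam \<le> \<delta>" "lam * step lam * Q \<le> \<sigma> / 4"
proof -
  let ?h = "step lam"
  have CgC: "0 \<le> Cg * C" using Cg_nonneg C_nonneg by simp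
  show "0 < ?h" using assms \<gamma>_pos window_length_bounds C_nonneg CgC \<delta>_pos \<sigma>_bounds Q_ge_1 by (simp add: step_def)
  show "?h \<le> \<gamma> / 2" unfolding step_def by (rule min.cobounded1)
  have "L * ?h \<le> L * window_length" using L_nonneg by (intro mult_left_mono) (auto simp: step_def)
  then show "L * ?h \<le> 1/2" using window_length_bounds by simp
  have "C * ?h \<le> C * (1 / (2 * C + 1))" using C_nonneg by (intro mult_left_mono) (auto simp: step_def)
  also have "\<dots> \<le> 1/2" using C_nonneg by (simp add: field_simps)
  finally show "C * ?h \<le> 1/2" .
  have "Cg * C * ?h \<le> Cg * C * (\<delta> / (Cg * C + 1))" using CgC by (intro mult_left_mono) (auto simp: step_def)
  also have "\<dots> \<le> \<delta>" using CgC \<delta>_pos by (simp add: field_simps)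
  finally show "Cg * C * ?h \<le> \<delta>" .
  have "lam * Q * ?h \<le> lam * Q * (\<sigma> / (4 * lam * Q))"
    using assms Q_ge_1 by (intro mult_left_mono) (auto simp: step_def)
  also have "\<dots> = \<sigma> / 4" using assms Q_ge_1 by (simp add: field_simps)
  finally show "lam * ?h * Q \<le> \<sigma> / 4" by (simp add: algebra_simps)
qed

lemma slack_bounds:
  assumes "0 < lam"
  shows "0 < slack lam" "slack lam \<le> \<delta> / 2" "slack lam \<le> \<sigma> * step lam / 4" "slack lam \<le> \<kappa> / 2"
  using step_bounds[OF assms] \<delta>_pos \<sigma>_bounds \<kappa>_bounds by (auto simp: slack_def)

end

locale doubling_point = comparison_window +
  fixes lam :: real and xh :: 'a and th :: real and yh :: 'a and sh :: real
  assumes lam: "2 \<le> lam"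
    and x_mem: "(xh, th) \<in> X" and y_mem: "(yh, sh) \<in> Y"
    and x_max: "\<And>x t. (x, t) \<in> X \<Longrightarrow> \<Phi> lam x t yh sh \<le> \<Phi> lam xh th yh sh"
    and y_near_min: "\<And>y s. (y, s) \<in> Y \<Longrightarrow> \<Phi> lam xh th y s \<le> \<Phi> lam xh th yh sh + slack lam"
    and concentrated: "lam * ((xh - yh) \<bullet> (xh - yh) + (th - sh)^2) \<le> 2 * \<kappa>"
    and large: "2 * \<delta> < \<Phi> lam xh th yh sh"

context comparison_window
begin

definition "\<Psi> lam p = \<Phi> lam (fst (fst p)) (snd (fst p)) (fst (snd p)) (snd (snd p))"

lemma \<Psi>_le_B:
  assumes "0 \<le> lam" and "p \<in> X \<times> Y"
  shows "\<Psi> lam p \<le> B"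
proof -
  obtain x t y s where p: "p = ((x, t), (y, s))" "(x, t) \<in> X" "(y, s) \<in> Y"
    using assms(2) by (metis mem_Times_iff prod.collapse)
  have "\<Psi> lam p \<le> W x t - V y s - \<zeta> x t" using \<Phi>_le_gap[OF assms(1) p(2)] p by (simp add: \<Psi>_def)
  then show ?thesis using gap_le_B[OF p(2,3)] \<zeta>_pos[of x t] by linarith
qed

lemma concentrating_weight:
  "\<exists>lam\<ge>2. \<forall>p\<in>X \<times> Y. Sup (\<Psi> lam ` (X \<times> Y)) - \<kappa>/2 < \<Psi> lam p \<longrightarrow>
    lam * ((fst (fst p) - fst (snd p)) \<bullet> (fst (fst p) - fst (snd p)) + (snd (fst p) - snd (snd p))^2)
      \<le> 2 * \<kappa>"
proof -
  define D where "D p = (fst (fst p) - fst (snd p)) \<bullet> (fst (fst p) - fst (snd p))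
    + (snd (fst p) - snd (snd p))^2" for p :: "('a \<times> real) \<times> ('a \<times> real)"
  have \<Psi>_eq: "\<Psi> lam p = \<Psi> 0 p - lam * D p" for lam p
    unfolding \<Psi>_def D_def by (rule \<Phi>_eq)
  have "((xb, Tp), (xb, Tp)) \<in> X \<times> Y" "D ((xb, Tp), (xb, Tp)) = 0"
    using X_nonempty Y_nonempty by (auto simp: D_def)
  moreover have "0 \<le> D p" for p
    unfolding D_def by (intro add_nonneg_nonneg inner_ge_zero zero_le_power2)
  ultimately have "\<exists>lam\<ge>2. \<forall>p\<in>X \<times> Y.
      Sup ((\<lambda>p. \<Psi> 0 p - lam * D p) ` (X \<times> Y)) - \<kappa>/2 < \<Psi> 0 p - lam * D p \<longrightarrow> lam * D p \<le> 2 * \<kappa>"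
    using \<Psi>_le_B[of 0] \<kappa>_bounds(1) by (intro penalization_concentrates[where B=B]) auto
  then have "\<exists>lam\<ge>2. \<forall>p\<in>X \<times> Y. Sup (\<Psi> lam ` (X \<times> Y)) - \<kappa>/2 < \<Psi> lam p \<longrightarrow> lam * D p \<le> 2 * \<kappa>"
    by (simp only: \<Psi>_eq[symmetric])
  then show ?thesis by (simp only: D_def)
qed

lemma doubling_point_exists:
  assumes gap: "4 * \<delta> \<le> W xb Tp - V xb Tp"
  shows "\<exists>lam xh th yh sh. doubling_point W V g l F I reach L Cg Cl t0 Tp xb \<delta> lam xh th yh sh"
proof -
  obtain lam where lam: "2 \<le> lam" and conc: "\<And>p. p \<in> X \<times> Y \<Longrightarrow> Sup (\<Psi> lam ` (X \<times> Y)) - \<kappa>/2 < \<Psi> lam p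
    \<Longrightarrow> lam * ((fst (fst p) - fst (snd p)) \<bullet> (fst (fst p) - fst (snd p)) + (snd (fst p) - snd (snd p))^2)
      \<le> 2 * \<kappa>"
    using concentrating_weight by blast
  define M where "M = Sup (\<Psi> lam ` (X \<times> Y))"
  have M_upper: "\<Psi> lam p \<le> M" if "p \<in> X \<times> Y" for p
    unfolding M_def using \<Psi>_le_B lam that by (intro cSup_upper bdd_aboveI2[where M=B]) auto
  have slack: "0 < slack lam" "slack lam \<le> \<delta> / 2" "slack lam \<le> \<kappa> / 2"
    using slack_bounds lam by auto
  obtain pq where pq: "pq \<in> X \<times> Y" "M - slack lam < \<Psi> lam pq"
    using less_cSupD[of "\<Psi> lam ` (X \<times> Y)" "M - slack lam"] X_nonempty Y_nonempty slack(1)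
    by (force simp: M_def)
  define yh sh where "yh = fst (snd pq)" and "sh = snd (snd pq)"
  have "continuous_on X (\<lambda>p. \<Phi> lam (fst p) (snd p) yh sh)"
    unfolding \<Phi>_def \<zeta>_def by (intro continuous_intros continuous_on_subset[OF W_cont X_subset])
  then obtain xh th where xt: "(xh, th) \<in> X"
    and xmax: "\<And>x t. (x, t) \<in> X \<Longrightarrow> \<Phi> lam x t yh sh \<le> \<Phi> lam xh th yh sh"
    using continuous_attains_sup[OF X_compact] X_nonempty by fastforce
  have y_mem: "(yh, sh) \<in> Y" using pq(1) by (auto simp: yh_def sh_def mem_Times_iff)
  have "\<Psi> lam pq \<le> \<Phi> lam xh th yh sh"
    using xmax pq(1) by (auto simp: \<Psi>_def yh_def sh_def mem_Times_iff)
  then have near: "M - slack lam < \<Phi> lam xh th yh sh" using pq(2) by simp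
  have "doubling_point W V g l F I reach L Cg Cl t0 Tp xb \<delta> lam xh th yh sh"
  proof (unfold_locales)
    show "\<Phi> lam xh th y s \<le> \<Phi> lam xh th yh sh + slack lam" if "(y, s) \<in> Y" for y s
      using M_upper[of "((xh, th), (y, s))"] near that xt by (simp add: \<Psi>_def)
    show "lam * ((xh - yh) \<bullet> (xh - yh) + (th - sh)^2) \<le> 2 * \<kappa>"
      using conc[of "((xh, th), (yh, sh))"] xt y_mem near slack unfolding M_def by (simp add: \<Psi>_def)
    have "\<Psi> lam ((xb, Tp), (xb, Tp)) = W xb Tp - V xb Tp - \<delta> - \<sigma> * Tp"
      by (simp add: \<Psi>_def \<Phi>_def \<zeta>_center)
    moreover have "\<sigma> * Tp \<le> \<delta> / 2"
      using \<sigma>_bounds T2_bounds by (smt (verit) mult_left_mono)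
    ultimately show "2 * \<delta> < \<Phi> lam xh th yh sh"
      using M_upper[of "((xb, Tp), (xb, Tp))"] X_nonempty Y_nonempty near slack gap by simp
  qed (use lam xt y_mem xmax in auto)
  then show ?thesis by blast
qed

end

context doubling_point
begin

definition "sep = (xh - yh) \<bullet> (xh - yh) + (th - sh)^2"

lemma close: "norm (xh - yh) \<le> \<rho>" "\<bar>th - sh\<bar> \<le> \<rho>"
proof -
  have "2 * sep \<le> lam * sep" using lam by (intro mult_right_mono) (auto simp: sep_def)
  then have "sep \<le> \<rho>^2" using concentrated \<kappa>_bounds by (simp add: sep_def)
  then have "(xh - yh) \<bullet> (xh - yh) \<le> \<rho>^2" "(th - sh)^2 \<le> \<rho>^2"
    using inner_ge_zero[of "xh - yh"] zero_le_power2[of "th - sh"] unfolding sep_def by linarith+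
  then have "(norm (xh - yh))^2 \<le> \<rho>^2" "\<bar>th - sh\<bar>^2 \<le> \<rho>^2"
    by (simp_all add: power2_norm_eq_inner)
  then show "norm (xh - yh) \<le> \<rho>" "\<bar>th - sh\<bar> \<le> \<rho>"
    using \<rho>_bounds(1) by (auto simp: power2_le_iff_abs_le)
qed

lemma lam_pos: "0 < lam"
  using lam by simp

lemma x_range: "norm (xh - xb) \<le> R" "t0 \<le> th" "th \<le> T2"
  using x_mem by (auto simp: X_def dist_norm norm_minus_commute)

lemma y_range: "norm (yh - xb) \<le> R + 1" "t0 \<le> sh" "sh \<le> T2"
  using y_mem by (auto simp: Y_def dist_norm norm_minus_commute)

lemma gap_large: "2 * \<delta> < W xh th - V yh sh"
  using large \<Phi>_le_gap[OF _ x_mem, of lam yh sh] lam \<zeta>_pos[of xh th] by linarith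

lemma interior: "norm (xh - xb) < R" "th < T2"
proof -
  have "norm (xh - xb) < R \<and> th < T2"
  proof (rule ccontr)
    assume "\<not> (norm (xh - xb) < R \<and> th < T2)"
    then have "\<bar>B\<bar> + 2 * \<delta> \<le> \<zeta> xh th" by (rule \<zeta>_large_off_interior[OF x_mem])
    then show False
      using large \<Phi>_le_gap[OF _ x_mem, of lam yh sh] lam gap_le_B[OF x_mem y_mem] \<delta>_pos by linarith
  qed
  then show "norm (xh - xb) < R" "th < T2" by auto
qed

lemma late: "t0 + \<gamma> / 2 \<le> th" "t0 + \<gamma> / 2 \<le> sh"
proof -
  have "t0 + \<gamma> / 2 \<le> th \<and> t0 + \<gamma> / 2 \<le> sh"
  proof (rule ccontr)
    assume "\<not> (t0 + \<gamma> / 2 \<le> th \<and> t0 + \<gamma> / 2 \<le> sh)"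
    then have "th \<in> {t0..t0 + \<gamma>}" "sh \<in> {t0..t0 + \<gamma>}"
      using close(2) \<rho>_bounds(2) x_range y_range by auto
    moreover have "norm (xh - yh) \<le> \<gamma>" using close(1) \<rho>_bounds(2) \<gamma>_pos by linarith
    ultimately have "W xh th - V yh sh < \<delta>" using W_V_gap_small_\<gamma> x_range(1) by blast
    then show False using gap_large \<delta>_pos by linarith
  qed
  then show "t0 + \<gamma> / 2 \<le> th" "t0 + \<gamma> / 2 \<le> sh" by auto
qed

lemma th_pos: "0 < th"
  using late \<gamma>_pos t0_nonneg by linarith

lemma V_below_g: "V yh sh < g yh - Cg * C * step lam"
proof (rule ccontr)
  assume "\<not> ?thesis"
  moreover have "W xh th \<le> g xh" using W_le_g th_pos by simp
  moreover have "g xh - g yh \<le> Cg * \<rho>"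
    using g_diff_le[of xh yh] mult_left_mono[OF close(1) Cg_nonneg] by linarith
  ultimately show False using gap_large \<rho>_bounds(4) step_bounds(5)[OF lam_pos] \<delta>_pos by linarith
qed

lemma no_exit: "\<not> (reach \<and> W xh th \<le> l xh)"
proof
  assume exit: "reach \<and> W xh th \<le> l xh"
  have "0 \<le> Cg * C * step lam" using Cg_nonneg C_nonneg step_bounds(1)[OF lam_pos] by simp
  then have "V yh sh < g yh" using V_below_g by linarith
  then have "l yh \<le> V yh sh" using V_reach[of sh yh] exit y_range t0_nonneg by linarith
  moreover have "l xh - l yh \<le> Cl * \<rho>"
    using l_diff_le[of xh yh] mult_left_mono[OF close(1) Cl_nonneg] by linarith
  ultimately show False using exit gap_large \<rho>_bounds(5) \<delta>_pos by linarith
qed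

definition "penalty y s = lam * ((y - yh) \<bullet> (y - yh) + (s - sh)^2)
  + (\<delta> * exp (\<mu> * ((y - xb) \<bullet> (y - xb) + K * (s - Tp))) + \<sigma> * s)"
definition "penalty_x y s = (2 * lam) *\<^sub>R (y - yh)
  + (2 * \<mu> * \<delta> * exp (\<mu> * ((y - xb) \<bullet> (y - xb) + K * (s - Tp)))) *\<^sub>R (y - xb)"
definition "penalty_t y s = 2 * lam * (s - sh)
  + (\<mu> * K * \<delta> * exp (\<mu> * ((y - xb) \<bullet> (y - xb) + K * (s - Tp))) + \<sigma>)"

lemma C1_test_penalty: "C1_test penalty penalty_x penalty_t"
  unfolding penalty_def penalty_x_def penalty_t_def by (rule C1_test_add[OF C1_test_quadratic C1_test_barrier])

lemma penalty_local_max: "local_max_at (\<lambda>y s. W y s - penalty y s) xh th"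
  unfolding local_max_at_def
proof (intro exI[of _ "min (R - norm (xh - xb)) (min (th - t0) (T2 - th))"] conjI allI impI)
  show "0 < min (R - norm (xh - xb)) (min (th - t0) (T2 - th))"
    using interior late \<gamma>_pos by auto
  fix y s assume ys: "0 < s \<and> dist (y, s) (xh, th) < min (R - norm (xh - xb)) (min (th - t0) (T2 - th))"
  then have "norm (y - xh) < R - norm (xh - xb)" "\<bar>s - th\<bar> < th - t0" "\<bar>s - th\<bar> < T2 - th"
    using dist_fst_le[of "(y, s)" "(xh, th)"] dist_snd_le[of "(y, s)" "(xh, th)"]
    by (auto simp: dist_norm dist_real_def)
  then have "(y, s) \<in> X"
    using norm_triangle_ineq[of "y - xh" "xh - xb"] by (auto simp: X_def dist_norm norm_minus_commute)
  then have "\<Phi> lam y s yh sh \<le> \<Phi> lam xh th yh sh" by (rule x_max)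
  then show "W y s - penalty y s \<le> W xh th - penalty xh th"
    by (simp add: \<Phi>_def penalty_def \<zeta>_def algebra_simps)
qed

lemma drift_sub:
  assumes i: "i \<in> I" and drift: "penalty_t xh th \<le> penalty_x xh th \<bullet> F i xh"
  shows "2 * lam * (th - sh) + \<sigma> \<le> 2 * lam * ((xh - yh) \<bullet> F i xh)"
proof -
  define E where "E = \<mu> * \<delta> * exp (\<mu> * ((xh - xb) \<bullet> (xh - xb) + K * (th - Tp)))"
  have "0 \<le> \<mu>" using \<delta>_pos by (simp add: \<mu>_def add_nonneg_nonneg)
  then have E: "0 \<le> E" using \<delta>_pos by (simp add: E_def)
  have "E * (2 * ((xh - xb) \<bullet> F i xh)) \<le> E * K"
    using barrier_drift_le[OF i x_range(1)] E by (rule mult_left_mono)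
  moreover have "penalty_t xh th = 2 * lam * (th - sh) + E * K + \<sigma>"
    by (simp add: penalty_t_def E_def algebra_simps)
  moreover have "penalty_x xh th \<bullet> F i xh = 2 * lam * ((xh - yh) \<bullet> F i xh) + E * (2 * ((xh - xb) \<bullet> F i xh))"
    by (simp add: penalty_x_def E_def inner_add_left algebra_simps)
  ultimately show ?thesis using drift by linarith
qed

lemma norm_F_yh_le: "i \<in> I \<Longrightarrow> 2 * norm (F i yh) \<le> C"
  using norm_F_le[of i yh xb "R + 1"] y_range(1) by (simp add: C_def)

lemma superoptimal_step:
  assumes i: "i \<in> I"
  defines "h \<equiv> step lam"
  shows "\<exists>z. integral_curve (F i) yh (-sh) (-sh + h) z \<and>
    (z (-sh + h), sh - h) \<in> Y \<and> V (z (-sh + h)) (sh - h) \<le> V yh sh"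
proof -
  have h: "0 < h" "h \<le> sh" "L * h \<le> 1/2" "C * h \<le> 1/2" "h \<le> \<gamma> / 2"
    using step_bounds[of lam] lam late t0_nonneg by (auto simp: h_def)
  obtain z where z: "integral_curve (F i) yh (-sh) (-sh + h) z"
    and dp: "min (Inf ((\<lambda>\<tau>. g (z \<tau>)) ` {-sh..-sh + h})) (V (z (-sh + h)) (sh - h)) \<le> V yh sh"
    using V_superoptimal[OF i h(1,2)] by blast
  have near: "norm (z r - yh) \<le> C * h" if "r \<in> {-sh..-sh + h}" for r
  proof -
    have "norm (z r - yh) \<le> 2 * norm (F i yh) * (r - -sh)"
      using integral_curve_norm_le[OF F_lipschitz[OF i] z _ that] h by simp
    also have "\<dots> \<le> C * h" using that norm_F_yh_le[OF i] C_nonneg by (intro mult_mono) auto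
    finally show ?thesis .
  qed
  have "g yh - Cg * C * h \<le> Inf ((\<lambda>\<tau>. g (z \<tau>)) ` {-sh..-sh + h})"
  proof (rule cInf_greatest)
    fix v assume "v \<in> (\<lambda>\<tau>. g (z \<tau>)) ` {-sh..-sh + h}"
    then obtain r where r: "r \<in> {-sh..-sh + h}" "v = g (z r)" by auto
    have "g yh - g (z r) \<le> Cg * (C * h)"
      using g_diff_le[of yh "z r"] mult_left_mono[OF near[OF r(1)] Cg_nonneg]
      by (simp add: norm_minus_commute)
    then show "g yh - Cg * C * h \<le> v" using r by (simp add: mult.assoc)
  qed (use h in auto)
  then have "V (z (-sh + h)) (sh - h) \<le> V yh sh"
    using dp V_below_g by (auto simp: h_def min_le_iff_disj)
  moreover have "norm (z (-sh + h) - xb) \<le> R + 1"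
    using near[of "-sh + h"] h close(1) \<rho>_bounds(3) x_range(1)
      norm_triangle_ineq[of "z (-sh + h) - yh" "yh - xb"] norm_triangle_ineq[of "yh - xh" "xh - xb"]
    by (simp add: norm_minus_commute)
  then have "(z (-sh + h), sh - h) \<in> Y"
    using h late y_range by (auto simp: Y_def dist_norm norm_minus_commute)
  ultimately show ?thesis using z by blast
qed

text \<open>The other half of the doubling argument: V is superoptimal along F i from its near
  minimum (yh, sh), and this moves the penalty at the rate predicted by F i yh.\<close>

lemma drift_super:
  assumes i: "i \<in> I"
  shows "2 * lam * step lam * ((xh - yh) \<bullet> F i yh - (th - sh)) \<le> slack lam + lam * (step lam)^2 * Q"
proof -
  define h where "h = step lam"
  obtain z where z: "integral_curve (F i) yh (-sh) (-sh + h) z"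
    and zY: "(z (-sh + h), sh - h) \<in> Y" and V_step: "V (z (-sh + h)) (sh - h) \<le> V yh sh"
    using superoptimal_step[OF i] by (auto simp: h_def)
  define sep' where "sep' = (xh - z (-sh + h)) \<bullet> (xh - z (-sh + h)) + (th - (sh - h))^2"
  define v where "v = (xh - yh) \<bullet> F i yh - (th - sh)"
  from y_near_min[OF zY] V_step have "lam * sep - lam * sep' \<le> slack lam"
    by (simp add: \<Phi>_def sep_def sep'_def)
  moreover have "sep' \<le> sep - 2 * h * v + h^2 * Q"
    using sq_dist_along_integral_curve[OF F_lipschitz[OF i] z, where K="C / 2" and x=xh and t=th and s=sh]
      step_bounds[of lam] lam norm_F_yh_le[OF i] close(1) \<rho>_bounds(3)
    by (simp add: h_def sep_def sep'_def v_def Q_def C_def power2_eq_square algebra_simps)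
  then have "lam * sep' \<le> lam * (sep - 2 * h * v + h^2 * Q)"
    using lam by (intro mult_left_mono) auto
  ultimately have "2 * lam * h * v \<le> slack lam + lam * h^2 * Q" by (simp add: algebra_simps)
  then show ?thesis by (simp add: h_def v_def)
qed

lemma no_drift:
  assumes i: "i \<in> I"
  shows "\<not> penalty_t xh th \<le> penalty_x xh th \<bullet> F i xh"
proof
  assume drift: "penalty_t xh th \<le> penalty_x xh th \<bullet> F i xh"
  define h where "h = step lam"
  have h: "0 < h" using step_bounds lam by (simp add: h_def)
  have "(xh - yh) \<bullet> (F i xh - F i yh) \<le> norm (xh - yh) * norm (F i xh - F i yh)"
    by (rule norm_cauchy_schwarz)
  also have "\<dots> \<le> norm (xh - yh) * (L * norm (xh - yh))"
    using F_diff_le[OF i] by (intro mult_left_mono) auto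
  also have "\<dots> = L * ((xh - yh) \<bullet> (xh - yh))"
    by (simp add: power2_norm_eq_inner[symmetric] power2_eq_square)
  also have "\<dots> \<le> L * sep" using L_nonneg by (intro mult_left_mono) (simp_all add: sep_def)
  finally have "lam * ((xh - yh) \<bullet> (F i xh - F i yh)) \<le> lam * (L * sep)"
    using lam by (intro mult_left_mono) auto
  also have "\<dots> = L * (lam * sep)" by simp
  also have "\<dots> \<le> L * (2 * \<kappa>)"
    using concentrated L_nonneg by (intro mult_left_mono) (simp_all add: sep_def)
  also have "\<dots> \<le> \<sigma> / 8" using \<kappa>_bounds(3) by simp
  finally have lip: "2 * lam * ((xh - yh) \<bullet> F i xh) \<le> 2 * lam * ((xh - yh) \<bullet> F i yh) + \<sigma> / 4"
    by (simp add: inner_diff_right algebra_simps)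
  have "\<sigma> \<le> 2 * lam * ((xh - yh) \<bullet> F i yh - (th - sh)) + \<sigma> / 4"
    using drift_sub[OF i drift] lip by (simp add: algebra_simps)
  then have "h * \<sigma> \<le> h * (2 * lam * ((xh - yh) \<bullet> F i yh - (th - sh)) + \<sigma> / 4)"
    using h by (intro mult_left_mono) auto
  moreover have "h * (lam * h * Q) \<le> h * (\<sigma> / 4)"
    using step_bounds(6)[OF lam_pos] h by (intro mult_left_mono) (auto simp: h_def)
  moreover have "0 < h * \<sigma>" using h \<sigma>_bounds(1) by simp
  ultimately show False
    using drift_super[OF i] slack_bounds(3)[OF lam_pos] by (simp add: h_def power2_eq_square algebra_simps)
qed

end

context comparison_window
begin

lemma W_V_gap_lt: "W xb Tp - V xb Tp < 4 * \<delta>"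
proof (rule ccontr)
  assume "\<not> ?thesis"
  then obtain lam xh th yh sh
    where "doubling_point W V g l F I reach L Cg Cl t0 Tp xb \<delta> lam xh th yh sh"
    using doubling_point_exists by fastforce
  then interpret doubling_point W V g l F I reach L Cg Cl t0 Tp xb \<delta> lam xh th yh sh .
  show False
    using W_sub[OF C1_test_penalty th_pos penalty_local_max] no_exit no_drift by blast
qed

end

context comparison
begin

lemma W_le_V_on_window:
  assumes "0 \<le> t0" and "\<And>x. W x t0 \<le> V x t0" and "t0 < T" and "T \<le> t0 + window_length"
  shows "W x T \<le> V x T"
proof -
  have "W x T - V x T < 4 * \<delta>" if "0 < \<delta>" for \<delta>
  proof -
    interpret comparison_window W V g l F I reach L Cg Cl t0 T x \<delta>
      using assms that by unfold_locales auto
    show ?thesis by (rule W_V_gap_lt)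
  qed
  from this[of "(W x T - V x T) / 8"] show ?thesis by (cases "W x T \<le> V x T") auto
qed

theorem W_le_V:
  assumes "0 \<le> t"
  shows "W x t \<le> V x t"
proof -
  have "\<forall>x. \<forall>t\<in>{0..real n * window_length}. W x t \<le> V x t" for n
  proof (induction n)
    case 0
    then show ?case using W_le_V_initial by simp
  next
    case (Suc n)
    show ?case
    proof (intro allI ballI)
      fix x t assume t: "t \<in> {0..real (Suc n) * window_length}"
      show "W x t \<le> V x t"
      proof (cases "t \<le> real n * window_length")
        case True
        then show ?thesis using Suc t by auto
      next
        case False
        have "0 \<le> real n * window_length" using window_length_bounds by simp
        then show ?thesis
          using W_le_V_on_window[of "real n * window_length" t x] Suc False t
          by (auto simp: algebra_simps)
      qed
    qed
  qed
  moreover obtain n where "t / window_length < real n" using reals_Archimedean2 by blast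
  then have "t \<le> real n * window_length" using window_length_bounds by (simp add: field_simps)
  ultimately show ?thesis using assms by auto
qed

end

section \<open>The data-driven value function\<close>

text \<open>This is where the validity of the uncertainty sets enters: the true velocity
  f x (ud i) is among the candidates over which H_hat minimizes.\<close>

lemma H_hat_le_data_velocity:
  fixes f :: "'a::euclidean_space \<Rightarrow> 'u \<Rightarrow> 'a"
  assumes N: "N \<ge> 1"
    and valid: "\<forall>i\<in>{1..N}. \<forall>x. f x (ud i) - vd i \<in> E x (xd i)"
    and bdd: "\<forall>i\<in>{1..N}. \<forall>x p. bdd_below ((\<lambda>w. p \<bullet> w) ` {vd i + e | e. e \<in> E x (xd i)})"
  shows "\<exists>i\<in>{1..N}. H_hat N xd vd E x p \<le> p \<bullet> f x (ud i)"
proof -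
  define m where "m i = Inf ((\<lambda>w. p \<bullet> w) ` {vd i + e | e. e \<in> E x (xd i)})" for i
  have "Max (m ` {1..N}) \<in> m ` {1..N}" using N by (intro Max_in) auto
  then obtain i where i: "i \<in> {1..N}" and H: "H_hat N xd vd E x p = m i"
    by (auto simp: H_hat_def m_def)
  have "vd i + (f x (ud i) - vd i) \<in> {vd i + e | e. e \<in> E x (xd i)}" using valid i by blast
  then have "m i \<le> p \<bullet> (vd i + (f x (ud i) - vd i))"
    unfolding m_def using bdd i by (intro cInf_lower imageI) auto
  then show ?thesis using i H by auto
qed

lemma value_function_ge_subsolution:
  fixes f :: "'a::euclidean_space \<Rightarrow> 'u::euclidean_space \<Rightarrow> 'a" and N :: nat and ud :: "nat \<Rightarrow> 'u"
    and W :: "'a \<Rightarrow> real \<Rightarrow> real" and H :: "'a \<Rightarrow> 'a \<Rightarrow> real"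
  assumes P: "payoff P g"
    and f_lip: "\<forall>u\<in>U. L-lipschitz_on UNIV (\<lambda>x. f x u)"
    and g_lip: "Cg-lipschitz_on UNIV g" and l_lip: "Cl-lipschitz_on UNIV l"
    and N: "N \<ge> 1" and data_u: "\<forall>i\<in>{1..N}. ud i \<in> U"
    and H: "\<And>x p. \<exists>i\<in>{1..N}. H x p \<le> p \<bullet> f x (ud i)"
    and W_cont: "continuous_on (UNIV \<times> {0..}) (\<lambda>z. W (fst z) (snd z))"
    and W_sub: "\<And>\<phi> \<phi>x \<phi>t x t. C1_test \<phi> \<phi>x \<phi>t \<Longrightarrow> 0 < t \<Longrightarrow>
      local_max_at (\<lambda>y s. W y s - \<phi> y s) x t \<Longrightarrow>
      W x t \<le> g x \<and> (reach \<and> W x t \<le> l x \<or> \<phi>t x t \<le> H x (\<phi>x x t))"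
    and W_initial: "\<And>x. W x 0 \<le> g x" and W_le_V_initial: "\<And>x. W x 0 \<le> value_function P f U x 0"
    and V_reach: "\<And>y s. reach \<Longrightarrow> 0 \<le> s \<Longrightarrow> min (l y) (g y) \<le> value_function P f U y s"
    and t: "0 \<le> t"
  shows "W x t \<le> value_function P f U x t"
proof -
  interpret comparison W "value_function P f U" g l "\<lambda>i x. f x (ud i)" "{1..N}" reach L Cg Cl
  proof unfold_locales
    show "finite {1..N}" by simp
    show "{1..N} \<noteq> {}" using N by simp
    show "\<exists>z. integral_curve (\<lambda>x. f x (ud i)) y (-s) (-s + h) z \<and>
        min (Inf ((\<lambda>\<tau>. g (z \<tau>)) ` {-s..-s + h})) (value_function P f U (z (-s + h)) (s - h))
          \<le> value_function P f U y s"
      if "i \<in> {1..N}" "0 < h" "h \<le> s" for i y s h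
      by (rule payoff.value_superoptimal[OF P, where c="ud i"]) (use f_lip data_u that in auto)
    show "W x t \<le> g x \<and> (reach \<and> W x t \<le> l x \<or> (\<exists>i\<in>{1..N}. \<phi>t x t \<le> \<phi>x x t \<bullet> f x (ud i)))"
      if "C1_test \<phi> \<phi>x \<phi>t" "0 < t" "local_max_at (\<lambda>y s. W y s - \<phi> y s) x t" for \<phi> \<phi>x \<phi>t x t
      using W_sub[OF that] H[of x "\<phi>x x t"] by force
  qed (use N f_lip data_u g_lip l_lip W_cont W_initial W_le_V_initial V_reach in auto)
  show ?thesis using W_le_V[OF t] .
qed

lemma V_avoid_ge_viscosity_solution:
  fixes f :: "'a::euclidean_space \<Rightarrow> 'u::euclidean_space \<Rightarrow> 'a" and N :: nat and ud :: "nat \<Rightarrow> 'u"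
  assumes f_lip: "\<forall>u\<in>U. L-lipschitz_on UNIV (\<lambda>x. f x u)" and g_lip: "Cg-lipschitz_on UNIV g"
    and N: "N \<ge> 1" and data_u: "\<forall>i\<in>{1..N}. ud i \<in> U"
    and H: "\<And>x p. \<exists>i\<in>{1..N}. H x p \<le> p \<bullet> f x (ud i)"
    and W: "visc_solution (F_avoid g H) g W" and t: "0 \<le> t"
  shows "W x t \<le> V_avoid f U g x t"
  unfolding V_avoid_eq
proof (rule value_function_ge_subsolution[OF _ f_lip g_lip g_lip N data_u H _ _ _ _ _ t, where reach=False])
  have g: "continuous_on UNIV g" using lipschitz_on_continuous_on[OF g_lip] .
  then show P: "payoff (avoid_payoff g) g" by (rule payoff_avoid)
  have "g x \<le> value_function (avoid_payoff g) f U x 0" for x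
    using f_lip data_u N by (intro payoff.value_ge[OF P, where c="ud 1"]) (auto simp: avoid_payoff_zero)
  then show "W x 0 \<le> value_function (avoid_payoff g) f U x 0" for x
    using W by (simp add: visc_solution_def)
qed (use W in \<open>auto simp: visc_solution_def visc_subsolution_def F_avoid_def\<close>)

lemma V_reach_avoid_ge_viscosity_solution:
  fixes f :: "'a::euclidean_space \<Rightarrow> 'u::euclidean_space \<Rightarrow> 'a" and N :: nat and ud :: "nat \<Rightarrow> 'u"
  assumes f_lip: "\<forall>u\<in>U. L-lipschitz_on UNIV (\<lambda>x. f x u)"
    and g_lip: "Cg-lipschitz_on UNIV g" and l_lip: "Cl-lipschitz_on UNIV l"
    and N: "N \<ge> 1" and data_u: "\<forall>i\<in>{1..N}. ud i \<in> U"
    and H: "\<And>x p. \<exists>i\<in>{1..N}. H x p \<le> p \<bullet> f x (ud i)"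
    and W: "visc_solution (F_reach_avoid l g H) (\<lambda>x. min (l x) (g x)) W" and t: "0 \<le> t"
  shows "W x t \<le> V_reach_avoid f U l g x t"
  unfolding V_reach_avoid_eq
proof (rule value_function_ge_subsolution[OF _ f_lip g_lip l_lip N data_u H _ _ _ _ _ t, where reach=True])
  have g: "continuous_on UNIV g" using lipschitz_on_continuous_on[OF g_lip] .
  then show P: "payoff (reach_avoid_payoff l g) g" by (rule payoff_reach_avoid)
  show "min (l y) (g y) \<le> value_function (reach_avoid_payoff l g) f U y s" if "0 \<le> s" for y s
    using f_lip data_u N that reach_avoid_payoff_ge_start[OF g]
    by (intro payoff.value_ge[OF P, where c="ud 1"]) auto
  then show "W x 0 \<le> value_function (reach_avoid_payoff l g) f U x 0" for x
    using W by (simp add: visc_solution_def)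
qed (use W in \<open>auto simp: visc_solution_def visc_subsolution_def F_reach_avoid_def le_max_iff_disj\<close>)

theorem theorem1:
  fixes f :: "'a::euclidean_space \<Rightarrow> 'u::euclidean_space \<Rightarrow> 'a"
    and U :: "'u set"
    and g l :: "'a \<Rightarrow> real"
    and N :: nat
    and xd vd :: "nat \<Rightarrow> 'a"
    and ud :: "nat \<Rightarrow> 'u"
    and E :: "'a \<Rightarrow> 'a \<Rightarrow> 'a set"
    and Wa Wr :: "'a \<Rightarrow> real \<Rightarrow> real"
  assumes U_compact: "compact U" and U_ne: "U \<noteq> {}"
    and f_cont: "continuous_on (UNIV \<times> U) (\<lambda>z. f (fst z) (snd z))"
    and f_lip: "\<exists>L. \<forall>u\<in>U. L-lipschitz_on UNIV (\<lambda>x. f x u)"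
    and g_lip: "\<exists>C. C-lipschitz_on UNIV g"
    and l_lip: "\<exists>C. C-lipschitz_on UNIV l"
    and N_pos: "N \<ge> 1"
    and data_u: "\<forall>i\<in>{1..N}. ud i \<in> U"
    and data_v: "\<forall>i\<in>{1..N}. vd i = f (xd i) (ud i)"
    and E_closed: "\<forall>x y. closed (E x y)"
    and E_valid: "\<forall>i\<in>{1..N}. \<forall>x. f x (ud i) - vd i \<in> E x (xd i)"
    and H_hat_welldef: "\<forall>i\<in>{1..N}. \<forall>x p.
                         bdd_below ((\<lambda>w. p \<bullet> w) ` {vd i + e | e. e \<in> E x (xd i)})"
  shows "(visc_solution (F_avoid g (H_hat N xd vd E)) g Wa \<longrightarrow>
            (\<forall>x t. t \<ge> 0 \<longrightarrow> Wa x t \<le> V_avoid f U g x t))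
       \<and> (visc_solution (F_reach_avoid l g (H_hat N xd vd E)) (\<lambda>x. min (l x) (g x)) Wr \<longrightarrow>
            (\<forall>x t. t \<ge> 0 \<longrightarrow> Wr x t \<le> V_reach_avoid f U l g x t))"
proof -
  \<comment> \<open>Compactness of U, continuity of f in the control, the data values vd and closedness
    of E are not needed.\<close>
  obtain L where L: "\<forall>u\<in>U. L-lipschitz_on UNIV (\<lambda>x. f x u)" using f_lip by blast
  obtain Cg where Cg: "Cg-lipschitz_on UNIV g" using g_lip by blast
  obtain Cl where Cl: "Cl-lipschitz_on UNIV l" using l_lip by blast
  note H = H_hat_le_data_velocity[where f=f and ud=ud, OF N_pos E_valid H_hat_welldef]
  show ?thesis
    using V_avoid_ge_viscosity_solution[OF L Cg N_pos data_u H]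
      V_reach_avoid_ge_viscosity_solution[OF L Cg Cl N_pos data_u H]
    by blast
qed

end
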